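(* Let $K$ be a field, $q\in K\setminus\{0\}$ not a root of unity, and let $A=K\langle a,b\rangle/(ab-qba)$ be the coordinate ring of the quantum plane. Let $w=ab$ (a normal element), and let $\sigma$ be the automorphism of $A$ with $\sigma(a)=q^{-1}a$, $\sigma(b)=qb$, so that $wy=\sigma(y)w$ for all $y\in A$. Let $J=A(ab-1)$ and $x=a-1$. Then: (a) $J$ is a maximal left ideal of $A$, and for every $m\ge 0$ there is no $c\in A$ with $\sigma^m(x)c-1\in J$; (b) the left $A$-module $N=A/Ax$ is not artinian, and its nonzero submodules are exactly the modules $w^mN$, $m\ge 0$, which form a strictly descending chain $N\supsetneq wN\supsetneq w^2N\supsetneq\cdots$. *)

theory Defs
  imports Main "HOL-Library.Function_Algebras"
begin

text \<open>Concrete model of the quantum plane A = K<a,b>/(ab - q ba) over a field K: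
  an element is a finitely supported coefficient function on the PBW basis
  a^i b^j, indexed by (i,j).  Multiplication:
  (a^i b^j)(a^k b^l) = q^(-(j k)) a^(i+k) b^(j+l), which encodes ab = q ba.\<close>

definition qp_carrier :: "(nat \<times> nat \<Rightarrow> 'k::field) set" where
  "qp_carrier = {f. finite {p. f p \<noteq> 0}}"

definition qp_mult :: "'k::field \<Rightarrow> (nat \<times> nat \<Rightarrow> 'k) \<Rightarrow> (nat \<times> nat \<Rightarrow> 'k) \<Rightarrow> (nat \<times> nat \<Rightarrow> 'k)" where
  "qp_mult q f g = (\<lambda>(n, m). \<Sum>i\<le>n. \<Sum>j\<le>m.
      f (i, j) * g (n - i, m - j) * inverse q ^ (j * (n - i)))"

definition qp_mon :: "nat \<Rightarrow> nat \<Rightarrow> (nat \<times> nat \<Rightarrow> 'k::field)" where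
  "qp_mon i j = (\<lambda>p. if p = (i, j) then 1 else 0)"

abbreviation qp_one :: "nat \<times> nat \<Rightarrow> 'k::field" where "qp_one \<equiv> qp_mon 0 0"
abbreviation qp_a :: "nat \<times> nat \<Rightarrow> 'k::field" where "qp_a \<equiv> qp_mon 1 0"
abbreviation qp_b :: "nat \<times> nat \<Rightarrow> 'k::field" where "qp_b \<equiv> qp_mon 0 1"

primrec qp_pow :: "'k::field \<Rightarrow> (nat \<times> nat \<Rightarrow> 'k) \<Rightarrow> nat \<Rightarrow> (nat \<times> nat \<Rightarrow> 'k)" where
  "qp_pow q f 0 = qp_one"
| "qp_pow q f (Suc n) = qp_mult q (qp_pow q f n) f"

definition qp_w :: "'k::field \<Rightarrow> nat \<times> nat \<Rightarrow> 'k" where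
  "qp_w q = qp_mult q qp_a qp_b"

definition qp_sigma :: "'k::field \<Rightarrow> (nat \<times> nat \<Rightarrow> 'k) \<Rightarrow> (nat \<times> nat \<Rightarrow> 'k)" where
  "qp_sigma q f = (\<lambda>(i, j). inverse q ^ i * q ^ j * f (i, j))"

definition not_root_of_unity :: "'k::field \<Rightarrow> bool" where
  "not_root_of_unity q \<longleftrightarrow> (\<forall>n>0. q ^ n \<noteq> 1)"

definition qp_left_ideal :: "'k::field \<Rightarrow> (nat \<times> nat \<Rightarrow> 'k) set \<Rightarrow> bool" where
  "qp_left_ideal q L \<longleftrightarrow> L \<subseteq> qp_carrier \<and> 0 \<in> L
     \<and> (\<forall>u\<in>L. \<forall>v\<in>L. u + v \<in> L)
     \<and> (\<forall>r\<in>qp_carrier. \<forall>u\<in>L. qp_mult q r u \<in> L)"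

definition qp_maximal_left_ideal :: "'k::field \<Rightarrow> (nat \<times> nat \<Rightarrow> 'k) set \<Rightarrow> bool" where
  "qp_maximal_left_ideal q L \<longleftrightarrow> qp_left_ideal q L \<and> L \<noteq> qp_carrier
     \<and> (\<forall>L'. qp_left_ideal q L' \<and> L \<subseteq> L' \<longrightarrow> L' = L \<or> L' = qp_carrier)"

definition qp_lprincipal :: "'k::field \<Rightarrow> (nat \<times> nat \<Rightarrow> 'k) \<Rightarrow> (nat \<times> nat \<Rightarrow> 'k) set" where
  "qp_lprincipal q y = {qp_mult q c y | c. c \<in> qp_carrier}"

definition qp_cls :: "(nat \<times> nat \<Rightarrow> 'k::field) set \<Rightarrow> (nat \<times> nat \<Rightarrow> 'k) \<Rightarrow> (nat \<times> nat \<Rightarrow> 'k) set" where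
  "qp_cls I y = {y + z | z. z \<in> I}"

definition qp_quot :: "(nat \<times> nat \<Rightarrow> 'k::field) set \<Rightarrow> (nat \<times> nat \<Rightarrow> 'k) set set" where
  "qp_quot I = qp_cls I ` qp_carrier"

definition qp_quot_submodule :: "'k::field \<Rightarrow> (nat \<times> nat \<Rightarrow> 'k) set \<Rightarrow> (nat \<times> nat \<Rightarrow> 'k) set set \<Rightarrow> bool" where
  "qp_quot_submodule q I S \<longleftrightarrow> S \<subseteq> qp_quot I \<and> qp_cls I 0 \<in> S
     \<and> (\<forall>y\<in>qp_carrier. \<forall>z\<in>qp_carrier. qp_cls I y \<in> S \<longrightarrow> qp_cls I z \<in> S \<longrightarrow> qp_cls I (y + z) \<in> S)
     \<and> (\<forall>r\<in>qp_carrier. \<forall>y\<in>qp_carrier. qp_cls I y \<in> S \<longrightarrow> qp_cls I (qp_mult q r y) \<in> S)"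

definition qp_quot_artinian :: "'k::field \<Rightarrow> (nat \<times> nat \<Rightarrow> 'k) set \<Rightarrow> bool" where
  "qp_quot_artinian q I \<longleftrightarrow> (\<forall>S :: nat \<Rightarrow> (nat \<times> nat \<Rightarrow> 'k) set set.
      (\<forall>n. qp_quot_submodule q I (S n)) \<and> (\<forall>n. S (Suc n) \<subseteq> S n)
      \<longrightarrow> (\<exists>n. \<forall>k\<ge>n. S k = S n))"

definition qp_quot_lmult :: "'k::field \<Rightarrow> (nat \<times> nat \<Rightarrow> 'k) set \<Rightarrow> (nat \<times> nat \<Rightarrow> 'k) \<Rightarrow> (nat \<times> nat \<Rightarrow> 'k) set set" where
  "qp_quot_lmult q I t = {qp_cls I (qp_mult q t y) | y. y \<in> qp_carrier}"

end

theory Submission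
  imports Defs
begin

text \<open>
  Both \<open>J\<close> and \<open>Ax\<close> are principal left ideals \<open>A(a\<^sup>k b\<^sup>l - 1)\<close>.  Right multiplication
  by \<open>a\<^sup>k b\<^sup>l\<close> shifts PBW coefficients by \<open>(k, l)\<close>, so such an ideal is annihilated by
  every linear functional whose coefficient vector is invariant under the dual shift,
  and membership can be decided by explicit division.

  (a) The diagonal functionals \<open>\<psi>\<^sub>e\<close>, \<open>e\<close> on the boundary of the quadrant, are
  coordinates on \<open>A/J\<close>; left multiplication by \<open>w\<close> acts diagonally on them with the
  distinct eigenvalues \<open>q\<^sup>-\<^sup>i q\<^sup>j\<close>.  Separating eigenvectors, a left ideal \<open>L \<supsetneq> J\<close>
  contains a boundary monomial and hence \<open>1\<close>, so \<open>J\<close> is maximal.  A functional \<open>\<alpha>\<close>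
  vanishing on \<open>J\<close> but not at \<open>1\<close> kills every \<open>\<sigma>\<^sup>m(x) c\<close>.

  (b) The functionals \<open>\<chi>\<^sub>j\<close> identify \<open>N\<close> with \<open>K[b]\<close>, on which \<open>a\<close> acts diagonally with
  eigenvalues \<open>q\<^sup>j\<close> and \<open>b\<close> as the shift.  The subspaces stable under both are the
  spaces of vectors vanishing below some \<open>m\<close>, i.e. the submodules \<open>w\<^sup>m N\<close>; these form a
  strictly descending chain, so \<open>N\<close> is not artinian.
\<close>

section \<open>Multiplication by monomials\<close>

lemma sum_delta_rectangle:
  fixes n m i j :: nat
  shows "(\<Sum>i'\<le>n. \<Sum>j'\<le>m. if i' = i \<and> j' = j then F i' j' else (0::'a::comm_monoid_add))
       = (if i \<le> n \<and> j \<le> m then F i j else 0)"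
proof -
  have "(\<Sum>j'\<le>m. if i' = i \<and> j' = j then F i' j' else 0)
      = (if i' = i then (if j \<le> m then F i j else 0) else 0)" for i'
  proof (cases "i' = i")
    case True
    then have "(\<Sum>j'\<le>m. if i' = i \<and> j' = j then F i' j' else 0) = (\<Sum>j'\<le>m. if j' = j then F i j else 0)"
      by (intro sum.cong) auto
    then show ?thesis using True by simp
  qed simp
  then show ?thesis by (simp add: sum.delta)
qed

text \<open>Left multiplication by \<open>a\<^sup>i b\<^sup>j\<close> shifts the coefficients by \<open>(i,j)\<close>,
  with the twisting factor \<open>q\<^sup>-\<^sup>j\<^sup>n\<close> coming from moving \<open>b\<^sup>j\<close> past \<open>a\<^sup>n\<close>.\<close>

lemma mult_mon_left_pt:
  "qp_mult q (qp_mon i j) g (n, m)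
     = (if i \<le> n \<and> j \<le> m then g (n - i, m - j) * inverse q ^ (j * (n - i)) else 0)"
proof -
  have "qp_mult q (qp_mon i j) g (n, m) = (\<Sum>i'\<le>n. \<Sum>j'\<le>m.
      if i' = i \<and> j' = j then g (n - i', m - j') * inverse q ^ (j' * (n - i')) else 0)"
    unfolding qp_mult_def qp_mon_def by (simp, intro sum.cong refl) auto
  then show ?thesis by (simp only: sum_delta_rectangle)
qed

lemma mult_mon_right_pt:
  "qp_mult q g (qp_mon k l) (n, m)
     = (if k \<le> n \<and> l \<le> m then g (n - k, m - l) * inverse q ^ ((m - l) * k) else 0)"
  (is "_ = ?r")
proof -
  have "g (i, j) * qp_mon k l (n - i, m - j) * inverse q ^ (j * (n - i))
      = (if i = n - k \<and> j = m - l then ?r else 0)" if "i \<le> n" "j \<le> m" for i j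
  proof (cases "n - i = k \<and> m - j = l")
    case True
    then have "i = n - k" "j = m - l" "k \<le> n" "l \<le> m" using that by auto
    then show ?thesis using True by (simp add: qp_mon_def mult.commute)
  next
    case False
    then have "(if i = n - k \<and> j = m - l then ?r else 0) = 0" using that by auto
    moreover have "g (i, j) * qp_mon k l (n - i, m - j) = 0" using False unfolding qp_mon_def by auto
    ultimately show ?thesis by (simp only: mult_zero_left mult_zero_right)
  qed
  then have "qp_mult q g (qp_mon k l) (n, m) = (\<Sum>i\<le>n. \<Sum>j\<le>m. if i = n - k \<and> j = m - l then ?r else 0)"
    unfolding qp_mult_def prod.case by (intro sum.cong refl) auto
  then show ?thesis by (simp only: sum_delta_rectangle) simp
qed

lemma mult_one_left: "qp_mult q qp_one f = f"
  by (rule ext) (auto simp: mult_mon_left_pt)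

lemma mult_one_right: "qp_mult q f qp_one = f"
  by (rule ext) (auto simp: mult_mon_right_pt)

lemma mon_mult_mon:
  "qp_mult q (qp_mon i j) (qp_mon k l) = (\<lambda>p. inverse q ^ (j * k) * qp_mon (i + k) (j + l) p)"
proof (rule ext)
  fix p :: "nat \<times> nat"
  obtain n m where p: "p = (n, m)" by (cases p)
  show "qp_mult q (qp_mon i j) (qp_mon k l) p = inverse q ^ (j * k) * qp_mon (i + k) (j + l) p"
    unfolding p mult_mon_left_pt by (auto simp: qp_mon_def)
qed

lemma w_eq_mon: "qp_w q = qp_mon 1 1"
  unfolding qp_w_def mon_mult_mon by (simp add: qp_mon_def)

lemma carrier_bound:
  assumes "f \<in> qp_carrier"
  shows "\<exists>N. \<forall>n m. f (n, m) \<noteq> 0 \<longrightarrow> n \<le> N \<and> m \<le> N"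
proof -
  have "finite (fst ` {p. f p \<noteq> 0} \<union> snd ` {p. f p \<noteq> 0})"
    using assms by (simp add: qp_carrier_def)
  then obtain N where N: "\<forall>x \<in> fst ` {p. f p \<noteq> 0} \<union> snd ` {p. f p \<noteq> 0}. x \<le> N"
    using finite_nat_set_iff_bounded_le by blast
  show ?thesis
  proof (intro exI allI impI)
    fix n m assume "f (n, m) \<noteq> 0"
    then have "n \<in> fst ` {p. f p \<noteq> 0}" "m \<in> snd ` {p. f p \<noteq> 0}" by force+
    then show "n \<le> N \<and> m \<le> N" using N by blast
  qed
qed

lemma bound_carrier:
  assumes "\<forall>n m. f (n, m) \<noteq> 0 \<longrightarrow> n \<le> N \<and> m \<le> N"
  shows "f \<in> qp_carrier"
proof -
  have "{p. f p \<noteq> 0} \<subseteq> {..N} \<times> {..N}" using assms by auto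
  then show ?thesis unfolding qp_carrier_def by (auto intro: finite_subset)
qed

lemma zero_carrier: "0 \<in> qp_carrier"
  unfolding qp_carrier_def by simp

lemma mon_carrier: "qp_mon i j \<in> qp_carrier"
  by (rule bound_carrier[of _ "i + j"]) (auto simp: qp_mon_def)

lemma add_carrier: "f \<in> qp_carrier \<Longrightarrow> g \<in> qp_carrier \<Longrightarrow> f + g \<in> qp_carrier"
  unfolding qp_carrier_def
  by (auto intro: finite_subset[of _ "{p. f p \<noteq> 0} \<union> {p. g p \<noteq> 0}"])

lemma diff_carrier: "f \<in> qp_carrier \<Longrightarrow> g \<in> qp_carrier \<Longrightarrow> f - g \<in> qp_carrier"
  unfolding qp_carrier_def
  by (auto intro: finite_subset[of _ "{p. f p \<noteq> 0} \<union> {p. g p \<noteq> 0}"])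

lemma smul_carrier: "f \<in> qp_carrier \<Longrightarrow> (\<lambda>p. c * f p) \<in> qp_carrier"
  unfolding qp_carrier_def by (auto intro: finite_subset[of _ "{p. f p \<noteq> 0}"])

lemma mult_carrier:
  assumes "f \<in> qp_carrier" "g \<in> qp_carrier"
  shows "qp_mult q f g \<in> qp_carrier"
proof -
  obtain N1 where N1: "\<forall>n m. f (n, m) \<noteq> 0 \<longrightarrow> n \<le> N1 \<and> m \<le> N1"
    using carrier_bound[OF assms(1)] by blast
  obtain N2 where N2: "\<forall>n m. g (n, m) \<noteq> 0 \<longrightarrow> n \<le> N2 \<and> m \<le> N2"
    using carrier_bound[OF assms(2)] by blast
  have "qp_mult q f g (n, m) = 0" if far: "\<not> (n \<le> N1 + N2 \<and> m \<le> N1 + N2)" for n m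
  proof -
    have "f (i, j) * g (n - i, m - j) = 0" if "i \<le> n" "j \<le> m" for i j
    proof (rule ccontr)
      assume "f (i, j) * g (n - i, m - j) \<noteq> 0"
      then have "i \<le> N1" "j \<le> N1" "n - i \<le> N2" "m - j \<le> N2" using N1 N2 by auto
      with that far show False by linarith
    qed
    then show ?thesis unfolding qp_mult_def by (simp, intro sum.neutral ballI) auto
  qed
  then show ?thesis by (intro bound_carrier[of _ "N1 + N2"]) blast
qed

lemma mult_add_left: "qp_mult q (f + g) h = qp_mult q f h + qp_mult q g h"
  unfolding qp_mult_def by (rule ext) (auto simp: sum.distrib distrib_right)

lemma mult_diff_left: "qp_mult q (f - g) h = qp_mult q f h - qp_mult q g h"
  unfolding qp_mult_def by (rule ext) (auto simp: sum_subtractf left_diff_distrib)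

lemma mult_diff_right: "qp_mult q h (f - g) = qp_mult q h f - qp_mult q h g"
  unfolding qp_mult_def by (rule ext) (auto simp: sum_subtractf right_diff_distrib left_diff_distrib)

lemma mult_zero_left: "qp_mult q 0 h = 0"
  unfolding qp_mult_def by (rule ext) auto

lemma mult_smul_left: "qp_mult q (\<lambda>p. c * f p) h = (\<lambda>p. c * qp_mult q f h p)"
  unfolding qp_mult_def by (rule ext) (auto simp: sum_distrib_left mult.assoc)

lemma pow_w_eq: "qp_pow q (qp_w q) m = (\<lambda>p. inverse q ^ (\<Sum>i<m. i) * qp_mon m m p)"
proof (induction m)
  case 0
  show ?case by simp
next
  case (Suc m)
  have "qp_pow q (qp_w q) (Suc m) = qp_mult q (\<lambda>p. inverse q ^ (\<Sum>i<m. i) * qp_mon m m p) (qp_w q)"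
    by (simp only: qp_pow.simps(2) Suc.IH)
  also have "\<dots> = (\<lambda>p. inverse q ^ (\<Sum>i<m. i) * (inverse q ^ m * qp_mon (Suc m) (Suc m) p))"
    by (simp add: w_eq_mon mult_smul_left mon_mult_mon)
  also have "\<dots> = (\<lambda>p. inverse q ^ (\<Sum>i<Suc m. i) * qp_mon (Suc m) (Suc m) p)"
    by (simp add: power_add mult.assoc)
  finally show ?case .
qed

text \<open>Associativity in the special case of a monomial as right-most factor; this
  is all that is needed to see that \<open>A(a\<^sup>k b\<^sup>l - 1)\<close> is a left ideal.\<close>

lemma assoc_mon_right_pt:
  "qp_mult q r (qp_mult q c (qp_mon k l)) (n, m) = qp_mult q (qp_mult q r c) (qp_mon k l) (n, m)"
proof (cases "k \<le> n \<and> l \<le> m")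
  case True
  have "qp_mult q r (qp_mult q c (qp_mon k l)) (n, m)
      = (\<Sum>i\<le>n. \<Sum>j\<le>m. r (i, j) * (if k \<le> n - i \<and> l \<le> m - j
           then c (n - i - k, m - j - l) * inverse q ^ ((m - j - l) * k) else 0) * inverse q ^ (j * (n - i)))"
    unfolding qp_mult_def[of q r] by (simp add: mult_mon_right_pt)
  also have "\<dots> = (\<Sum>i\<le>n - k. \<Sum>j\<le>m. r (i, j) * (if k \<le> n - i \<and> l \<le> m - j
           then c (n - i - k, m - j - l) * inverse q ^ ((m - j - l) * k) else 0) * inverse q ^ (j * (n - i)))"
    by (rule sum.mono_neutral_right) (auto intro!: sum.neutral)
  also have "\<dots> = (\<Sum>i\<le>n - k. \<Sum>j\<le>m - l. r (i, j) * (if k \<le> n - i \<and> l \<le> m - j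
           then c (n - i - k, m - j - l) * inverse q ^ ((m - j - l) * k) else 0) * inverse q ^ (j * (n - i)))"
    by (rule sum.cong[OF refl], rule sum.mono_neutral_right) auto
  also have "\<dots> = (\<Sum>i\<le>n - k. \<Sum>j\<le>m - l. r (i, j) * c (n - k - i, m - l - j)
           * inverse q ^ (j * (n - k - i)) * inverse q ^ ((m - l) * k))"
  proof (intro sum.cong refl)
    fix i j assume "i \<in> {..n - k}" and "j \<in> {..m - l}"
    then obtain s t where s: "n = k + i + s" and t: "m = l + j + t" using True
      by (metis add.commute atMost_iff le_add_diff_inverse le_diff_conv2)
    have "(m - j - l) * k + j * (n - i) = j * (n - k - i) + (m - l) * k"
      using s t by (simp add: algebra_simps)
    then have "inverse q ^ ((m - j - l) * k) * inverse q ^ (j * (n - i))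
             = inverse q ^ (j * (n - k - i)) * inverse q ^ ((m - l) * k)"
      by (simp only: power_add[symmetric])
    moreover have "n - i - k = n - k - i" "m - j - l = m - l - j" "k \<le> n - i \<and> l \<le> m - j"
      using s t by auto
    ultimately show "r (i, j) * (if k \<le> n - i \<and> l \<le> m - j
           then c (n - i - k, m - j - l) * inverse q ^ ((m - j - l) * k) else 0) * inverse q ^ (j * (n - i))
         = r (i, j) * c (n - k - i, m - l - j) * inverse q ^ (j * (n - k - i)) * inverse q ^ ((m - l) * k)"
      by (simp add: mult_ac)
  qed
  also have "\<dots> = qp_mult q (qp_mult q r c) (qp_mon k l) (n, m)"
    using True by (simp add: mult_mon_right_pt qp_mult_def[of q r c] sum_distrib_right)
  finally show ?thesis .
next
  case False
  then show ?thesis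
    unfolding qp_mult_def[of q r] by (auto simp: mult_mon_right_pt intro!: sum.neutral)
qed

lemma assoc_mon_right:
  "qp_mult q r (qp_mult q c (qp_mon k l)) = qp_mult q (qp_mult q r c) (qp_mon k l)"
  by (rule ext) (auto simp: assoc_mon_right_pt)

lemma sigma_pow: "(qp_sigma q ^^ m) f = (\<lambda>(i, j). (inverse q ^ i * q ^ j) ^ m * f (i, j))"
proof (induction m)
  case 0
  show ?case by (rule ext) auto
next
  case (Suc m)
  show ?case
  proof (rule ext, clarify)
    fix i j
    show "(qp_sigma q ^^ Suc m) f (i, j) = (inverse q ^ i * q ^ j) ^ Suc m * f (i, j)"
      by (simp add: Suc.IH qp_sigma_def mult_ac)
  qed
qed

lemma sigma_pow_a_minus_one:
  "(qp_sigma q ^^ m) (qp_a - qp_one) = (\<lambda>p. inverse q ^ m * qp_a p) - qp_one"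
  by (rule ext) (auto simp: sigma_pow qp_mon_def split: if_splits)

section \<open>Linear functionals given by coefficient vectors\<close>

text \<open>Membership in the left ideals below will be tested by
  families of such functionals.\<close>

definition pairing :: "(nat \<times> nat \<Rightarrow> 'k::field) \<Rightarrow> (nat \<times> nat \<Rightarrow> 'k) \<Rightarrow> 'k" where
  "pairing c f = (\<Sum>p\<in>{p. f p \<noteq> 0}. f p * c p)"

lemma pairing_superset:
  assumes "finite S" "{p. f p \<noteq> 0} \<subseteq> S"
  shows "pairing c f = (\<Sum>p\<in>S. f p * c p)"
  unfolding pairing_def using assms by (intro sum.mono_neutral_left) auto

lemma pairing_add:
  assumes "f \<in> qp_carrier" "g \<in> qp_carrier"
  shows "pairing c (f + g) = pairing c f + pairing c g"
proof -
  let ?S = "{p. f p \<noteq> 0} \<union> {p. g p \<noteq> 0}"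
  have fin: "finite ?S" using assms by (simp add: qp_carrier_def)
  have "pairing c (f + g) = (\<Sum>p\<in>?S. (f + g) p * c p)" by (rule pairing_superset[OF fin]) auto
  also have "\<dots> = (\<Sum>p\<in>?S. f p * c p) + (\<Sum>p\<in>?S. g p * c p)"
    by (simp add: sum.distrib distrib_right)
  also have "\<dots> = pairing c f + pairing c g"
    using pairing_superset[OF fin, of f] pairing_superset[OF fin, of g] by auto
  finally show ?thesis .
qed

lemma pairing_diff:
  assumes "f \<in> qp_carrier" "g \<in> qp_carrier"
  shows "pairing c (f - g) = pairing c f - pairing c g"
proof -
  let ?S = "{p. f p \<noteq> 0} \<union> {p. g p \<noteq> 0}"
  have fin: "finite ?S" using assms by (simp add: qp_carrier_def)
  have "pairing c (f - g) = (\<Sum>p\<in>?S. (f - g) p * c p)" by (rule pairing_superset[OF fin]) auto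
  also have "\<dots> = (\<Sum>p\<in>?S. f p * c p) - (\<Sum>p\<in>?S. g p * c p)"
    by (simp add: sum_subtractf left_diff_distrib)
  also have "\<dots> = pairing c f - pairing c g"
    using pairing_superset[OF fin, of f] pairing_superset[OF fin, of g] by auto
  finally show ?thesis .
qed

lemma pairing_smul:
  assumes "f \<in> qp_carrier"
  shows "pairing c (\<lambda>p. a * f p) = a * pairing c f"
proof -
  have fin: "finite {p. f p \<noteq> 0}" using assms by (simp add: qp_carrier_def)
  have "pairing c (\<lambda>p. a * f p) = (\<Sum>p\<in>{p. f p \<noteq> 0}. a * f p * c p)"
    by (rule pairing_superset[OF fin]) auto
  also have "\<dots> = a * pairing c f" by (simp add: pairing_def sum_distrib_left mult.assoc)
  finally show ?thesis .
qed

lemma pairing_zero: "pairing c 0 = 0"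
  unfolding pairing_def by simp

lemma pairing_mon: "pairing c (qp_mon i j) = c (i, j)"
proof -
  have "pairing c (qp_mon i j) = (\<Sum>p\<in>{(i, j)}. qp_mon i j p * c p)"
    by (rule pairing_superset) (auto simp: qp_mon_def)
  then show ?thesis by (simp add: qp_mon_def)
qed

lemma pairing_cong: "(\<And>p. f p \<noteq> 0 \<Longrightarrow> c p = c' p) \<Longrightarrow> pairing c f = pairing c' f"
  unfolding pairing_def by (intro sum.cong) auto

lemma pairing_vanish: "(\<And>p. f p \<noteq> 0 \<Longrightarrow> c p = 0) \<Longrightarrow> pairing c f = 0"
  unfolding pairing_def by (intro sum.neutral) auto

lemma pairing_coef_add: "pairing (\<lambda>p. c1 p + c2 p) f = pairing c1 f + pairing c2 f"
  unfolding pairing_def by (simp add: sum.distrib distrib_left)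

lemma pairing_coef_smul: "pairing (\<lambda>p. a * c p) f = a * pairing c f"
  unfolding pairing_def by (simp add: sum_distrib_left mult_ac)

lemma pairing_coef_single:
  assumes "f \<in> qp_carrier"
  shows "pairing (\<lambda>p. if p = p0 then v else 0) f = f p0 * v"
proof -
  have fin: "finite ({p. f p \<noteq> 0} \<union> {p0})" using assms by (simp add: qp_carrier_def)
  have "pairing (\<lambda>p. if p = p0 then v else 0) f
      = (\<Sum>p\<in>{p. f p \<noteq> 0} \<union> {p0}. f p * (if p = p0 then v else 0))"
    by (rule pairing_superset[OF fin]) auto
  also have "\<dots> = f p0 * v" using fin by (simp add: if_distrib cong: if_cong)
  finally show ?thesis .
qed

lemma pairing_shift:
  assumes g: "g \<in> qp_carrier"
  shows "pairing c (\<lambda>(n, m). if i \<le> n \<and> j \<le> m then g (n - i, m - j) * s (n - i, m - j) else 0)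
       = pairing (\<lambda>(n, m). c (n + i, m + j) * s (n, m)) g"
proof -
  let ?F = "\<lambda>(n, m). if i \<le> n \<and> j \<le> m then g (n - i, m - j) * s (n - i, m - j) else 0"
  define h where "h = (\<lambda>(n::nat, m::nat). (n + i, m + j))"
  have fin: "finite {p. g p \<noteq> 0}" using g by (simp add: qp_carrier_def)
  have inj: "inj_on h {p. g p \<noteq> 0}" unfolding h_def by (auto simp: inj_on_def)
  have sub: "{p. ?F p \<noteq> 0} \<subseteq> h ` {p. g p \<noteq> 0}"
  proof
    fix p assume "p \<in> {p. ?F p \<noteq> 0}"
    then obtain n m where p: "p = (n, m)" "i \<le> n" "j \<le> m" "g (n - i, m - j) \<noteq> 0"
      by (cases p) (auto split: if_splits)
    then have "p = h (n - i, m - j)" unfolding h_def by auto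
    then show "p \<in> h ` {p. g p \<noteq> 0}" using p by auto
  qed
  have "pairing c ?F = (\<Sum>p\<in>h ` {p. g p \<noteq> 0}. ?F p * c p)"
    by (rule pairing_superset[OF _ sub]) (use fin in simp)
  also have "\<dots> = (\<Sum>p\<in>{p. g p \<noteq> 0}. ?F (h p) * c (h p))"
    by (subst sum.reindex[OF inj]) simp
  also have "\<dots> = pairing (\<lambda>(n, m). c (n + i, m + j) * s (n, m)) g"
    unfolding pairing_def by (intro sum.cong refl) (auto simp: h_def)
  finally show ?thesis .
qed

lemma pairing_mult_mon_left:
  assumes "g \<in> qp_carrier"
  shows "pairing c (qp_mult q (qp_mon i j) g)
       = pairing (\<lambda>(n, m). c (n + i, m + j) * inverse q ^ (j * n)) g"
proof -
  have "qp_mult q (qp_mon i j) g = (\<lambda>(n, m). if i \<le> n \<and> j \<le> m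
      then g (n - i, m - j) * (\<lambda>(a, b). inverse q ^ (j * a)) (n - i, m - j) else 0)"
    by (rule ext) (auto simp: mult_mon_left_pt)
  then show ?thesis using pairing_shift[OF assms, of c i j "\<lambda>(a, b). inverse q ^ (j * a)"]
    by (simp add: case_prod_beta)
qed

lemma pairing_mult_mon_right:
  assumes "g \<in> qp_carrier"
  shows "pairing c (qp_mult q g (qp_mon k l))
       = pairing (\<lambda>(n, m). c (n + k, m + l) * inverse q ^ (m * k)) g"
proof -
  have "qp_mult q g (qp_mon k l) = (\<lambda>(n, m). if k \<le> n \<and> l \<le> m
      then g (n - k, m - l) * (\<lambda>(a, b). inverse q ^ (b * k)) (n - k, m - l) else 0)"
    by (rule ext) (auto simp: mult_mon_right_pt)
  then show ?thesis using pairing_shift[OF assms, of c k l "\<lambda>(a, b). inverse q ^ (b * k)"]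
    by (simp add: case_prod_beta)
qed

lemma pairing_mult_decompose:
  assumes y: "y \<in> qp_carrier"
  shows "finite S \<Longrightarrow> {p. r p \<noteq> 0} \<subseteq> S \<Longrightarrow>
    pairing c (qp_mult q r y) = (\<Sum>p\<in>S. r p * pairing c (qp_mult q (qp_mon (fst p) (snd p)) y))"
proof (induction S arbitrary: r rule: finite_induct)
  case empty
  then have r0: "r = 0" by (auto intro!: ext)
  show ?case unfolding r0 mult_zero_left pairing_zero by simp
next
  case (insert a S)
  define r' where "r' = (\<lambda>x. if x = a then 0 else r x)"
  let ?m = "qp_mon (fst a) (snd a)"
  have r'S: "{p. r' p \<noteq> 0} \<subseteq> S" using insert.prems by (auto simp: r'_def)
  have r'c: "r' \<in> qp_carrier"
    unfolding qp_carrier_def using r'S insert.hyps(1) by (auto intro: finite_subset)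
  have m1: "qp_mult q r' y \<in> qp_carrier" by (rule mult_carrier[OF r'c y])
  have m2: "qp_mult q ?m y \<in> qp_carrier" by (rule mult_carrier[OF mon_carrier y])
  have r: "r = r' + (\<lambda>x. r a * ?m x)"
    by (rule ext) (auto simp: r'_def qp_mon_def)
  have "pairing c (qp_mult q r y) = pairing c (qp_mult q r' y) + r a * pairing c (qp_mult q ?m y)"
    by (subst r)
       (simp only: mult_add_left mult_smul_left pairing_add[OF m1 smul_carrier[OF m2]] pairing_smul[OF m2])
  also have "pairing c (qp_mult q r' y) = (\<Sum>p\<in>S. r' p * pairing c (qp_mult q (qp_mon (fst p) (snd p)) y))"
    by (rule insert.IH[OF r'S])
  also have "\<dots> = (\<Sum>p\<in>S. r p * pairing c (qp_mult q (qp_mon (fst p) (snd p)) y))"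
    using insert.hyps(2) by (intro sum.cong refl) (auto simp: r'_def)
  finally show ?case using insert.hyps by (simp add: add.commute)
qed

section \<open>Principal left ideals \<open>A(a\<^sup>k b\<^sup>l - 1)\<close>\<close>

lemma principal_left_ideal:
  fixes q :: "'k::field"
  shows "qp_left_ideal q (qp_lprincipal q (qp_mon k l - qp_one))"
  unfolding qp_left_ideal_def
proof (intro conjI ballI)
  let ?u = "qp_mon k l - qp_one :: nat \<times> nat \<Rightarrow> 'k"
  show "qp_lprincipal q ?u \<subseteq> qp_carrier"
    unfolding qp_lprincipal_def using mult_carrier diff_carrier mon_carrier by blast
  have "0 = qp_mult q 0 ?u" by (simp add: mult_zero_left)
  then show "0 \<in> qp_lprincipal q ?u" unfolding qp_lprincipal_def using zero_carrier by blast
next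
  fix u v assume "u \<in> qp_lprincipal q (qp_mon k l - qp_one)" "v \<in> qp_lprincipal q (qp_mon k l - qp_one)"
  then obtain c1 c2 where "u = qp_mult q c1 (qp_mon k l - qp_one)" "v = qp_mult q c2 (qp_mon k l - qp_one)"
    "c1 \<in> qp_carrier" "c2 \<in> qp_carrier" unfolding qp_lprincipal_def by blast
  then show "u + v \<in> qp_lprincipal q (qp_mon k l - qp_one)"
    unfolding qp_lprincipal_def by (metis (mono_tags, lifting) add_carrier mem_Collect_eq mult_add_left)
next
  fix r u :: "nat \<times> nat \<Rightarrow> 'k" assume r: "r \<in> qp_carrier" and "u \<in> qp_lprincipal q (qp_mon k l - qp_one)"
  then obtain c where u: "u = qp_mult q c (qp_mon k l - qp_one)" "c \<in> qp_carrier"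
    unfolding qp_lprincipal_def by blast
  have "qp_mult q r u = qp_mult q (qp_mult q r c) (qp_mon k l - qp_one)"
    unfolding u by (simp add: mult_diff_right mult_one_right assoc_mon_right)
  then show "qp_mult q r u \<in> qp_lprincipal q (qp_mon k l - qp_one)"
    unfolding qp_lprincipal_def using mult_carrier[OF r u(2)] by blast
qed

lemma pairing_vanishes_on_principal:
  assumes inv: "\<And>n m. c (n + k, m + l) * inverse q ^ (m * k) = c (n, m)"
    and y: "y \<in> qp_carrier"
  shows "pairing c (qp_mult q y (qp_mon k l - qp_one)) = 0"
proof -
  have "pairing c (qp_mult q y (qp_mon k l)) = pairing c y"
    unfolding pairing_mult_mon_right[OF y] using inv by (intro pairing_cong) auto
  then show ?thesis
    by (simp add: mult_diff_right mult_one_right pairing_diff mult_carrier y mon_carrier)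
qed

text \<open>Suppose \<open>D\<close> accumulates the
  \<open>\<gamma>\<close>-weighted coefficients of \<open>f\<close> along the chains \<open>p, p + (k,l), p + 2(k,l), \<dots>\<close>
  and has finite support.  Then \<open>c = -D/\<gamma>\<close> is a quotient: \<open>f = c (a\<^sup>k b\<^sup>l - 1)\<close>.\<close>

lemma mem_principal_by_division:
  fixes q :: "'k::field" and \<gamma> D :: "nat \<times> nat \<Rightarrow> 'k"
  assumes q: "q \<noteq> 0" and \<gamma>: "\<And>p. \<gamma> p \<noteq> 0"
    and \<gamma>_step: "\<And>n m. \<gamma> (n + k, m + l) = \<gamma> (n, m) * q ^ (m * k)"
    and D_base: "\<And>n m. \<not> (k \<le> n \<and> l \<le> m) \<Longrightarrow> D (n, m) = f (n, m) * \<gamma> (n, m)"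
    and D_step: "\<And>n m. D (n + k, m + l) = D (n, m) + f (n + k, m + l) * \<gamma> (n + k, m + l)"
    and D_fin: "finite {p. D p \<noteq> 0}"
  shows "f \<in> qp_lprincipal q (qp_mon k l - qp_one)"
proof -
  define c where "c = (\<lambda>p. - D p / \<gamma> p)"
  have c: "c \<in> qp_carrier"
    unfolding qp_carrier_def c_def mem_Collect_eq by (rule finite_subset[OF _ D_fin]) auto
  have "qp_mult q c (qp_mon k l - qp_one) = f"
  proof (rule ext, clarify)
    fix n' m'
    show "qp_mult q c (qp_mon k l - qp_one) (n', m') = f (n', m')"
    proof (cases "k \<le> n' \<and> l \<le> m'")
      case True
      then obtain n m where nm: "n' = n + k" "m' = m + l" by (metis le_add_diff_inverse2)
      have "qp_mult q c (qp_mon k l - qp_one) (n', m') = c (n, m) * inverse q ^ (m * k) - c (n', m')"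
        by (simp add: mult_diff_right mult_one_right mult_mon_right_pt nm)
      also have "\<dots> = - D (n, m) / (\<gamma> (n, m) * q ^ (m * k))
          + (D (n, m) + f (n', m') * (\<gamma> (n, m) * q ^ (m * k))) / (\<gamma> (n, m) * q ^ (m * k))"
        unfolding c_def nm D_step \<gamma>_step by (auto simp: power_inverse divide_inverse algebra_simps)
      also have "\<dots> = f (n', m')"
        using \<gamma>[of "(n, m)"] q by (simp add: field_simps)
      finally show ?thesis .
    next
      case False
      then have "qp_mult q c (qp_mon k l) (n', m') = 0" by (auto simp: mult_mon_right_pt)
      then show ?thesis using D_base[OF False] \<gamma>[of "(n', m')"]
        by (simp add: mult_diff_right mult_one_right c_def)
    qed
  qed
  with c show ?thesis unfolding qp_lprincipal_def by blast
qed

lemma left_ideal_smul: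
  assumes L: "qp_left_ideal q L" and g: "g \<in> L"
  shows "(\<lambda>p. c * g p) \<in> L"
proof -
  have "qp_mult q (\<lambda>p. c * qp_one p) g = (\<lambda>p. c * g p)"
    by (simp add: mult_smul_left mult_one_left)
  moreover have "(\<lambda>p. c * qp_one p) \<in> qp_carrier" by (intro smul_carrier mon_carrier)
  ultimately show ?thesis using L g unfolding qp_left_ideal_def by metis
qed

lemma left_ideal_one:
  fixes q :: "'k::field"
  assumes L: "qp_left_ideal q L" and one: "qp_one \<in> L"
  shows "L = qp_carrier"
proof
  show "L \<subseteq> qp_carrier" using L unfolding qp_left_ideal_def by blast
  show "qp_carrier \<subseteq> L"
  proof
    fix r :: "nat \<times> nat \<Rightarrow> 'k" assume "r \<in> qp_carrier"
    then have "qp_mult q r qp_one \<in> L" using L one unfolding qp_left_ideal_def by blast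
    then show "r \<in> L" by (simp add: mult_one_right)
  qed
qed

section \<open>Two facts from linear algebra\<close>

text \<open>Let \<open>V\<close> be a space of finitely supported
  vectors that is stable under a diagonal operator \<open>v \<mapsto> \<theta> \<cdot> v\<close> whose eigenvalues
  \<open>\<theta> x\<close> are pairwise distinct on the relevant coordinates.  Then together with any
  \<open>v\<close> with \<open>v x\<^sub>0 \<noteq> 0\<close> the space contains the unit vector at \<open>x\<^sub>0\<close>: applying
  \<open>\<theta> - \<theta> x\<^sub>1\<close> kills the coordinate \<open>x\<^sub>1\<close> and keeps \<open>x\<^sub>0\<close>.\<close>

lemma eigen_isolate:
  fixes V :: "('x \<Rightarrow> 'k::field) set"
  assumes add: "\<And>u v. u \<in> V \<Longrightarrow> v \<in> V \<Longrightarrow> (\<lambda>x. u x + v x) \<in> V"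
    and scale: "\<And>c v. v \<in> V \<Longrightarrow> (\<lambda>x. c * v x) \<in> V"
    and diag: "\<And>v. v \<in> V \<Longrightarrow> (\<lambda>x. \<theta> x * v x) \<in> V"
    and fin: "\<And>v. v \<in> V \<Longrightarrow> finite {x. v x \<noteq> 0}"
    and inj: "inj_on \<theta> B"
    and supp: "\<And>v. v \<in> V \<Longrightarrow> {x. v x \<noteq> 0} \<subseteq> B"
  shows "v \<in> V \<Longrightarrow> v x0 \<noteq> 0 \<Longrightarrow> (\<lambda>x. if x = x0 then 1 else 0) \<in> V"
proof (induction "card {x. v x \<noteq> 0}" arbitrary: v rule: less_induct)
  case less
  show ?case
  proof (cases "{x. v x \<noteq> 0} = {x0}")
    case True
    then have "(\<lambda>x. inverse (v x0) * v x) = (\<lambda>x. if x = x0 then 1 else 0)"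
      using less.prems(2) by (auto intro!: ext)
    then show ?thesis using scale[OF less.prems(1)] by metis
  next
    case False
    then obtain x1 where x1: "v x1 \<noteq> 0" "x1 \<noteq> x0" using less.prems(2) by blast
    define u where "u = (\<lambda>x. (\<lambda>x. \<theta> x * v x) x + (\<lambda>x. (- \<theta> x1) * v x) x)"
    have uV: "u \<in> V" unfolding u_def by (intro add diag scale less.prems(1))
    have ux: "u x = (\<theta> x - \<theta> x1) * v x" for x by (simp add: u_def algebra_simps)
    have B: "x0 \<in> B" "x1 \<in> B" using supp[OF less.prems(1)] x1 less.prems(2) by auto
    have supp_u: "{x. u x \<noteq> 0} = {x. v x \<noteq> 0} - {x1}"
    proof (rule set_eqI)
      fix x
      show "x \<in> {x. u x \<noteq> 0} \<longleftrightarrow> x \<in> {x. v x \<noteq> 0} - {x1}"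
      proof (cases "v x = 0")
        case False
        then have "x \<in> B" using supp[OF less.prems(1)] by auto
        then have "\<theta> x = \<theta> x1 \<longleftrightarrow> x = x1" using inj_onD[OF inj _ _ B(2)] by auto
        then show ?thesis using False by (auto simp: ux)
      qed (simp add: ux)
    qed
    have "card {x. u x \<noteq> 0} < card {x. v x \<noteq> 0}"
      unfolding supp_u by (rule card_Diff1_less[OF fin[OF less.prems(1)]]) (simp add: x1)
    moreover have "u x0 \<noteq> 0"
      using B inj x1(2) less.prems(2) by (auto simp: ux dest: inj_onD)
    ultimately show ?thesis using less.hyps uV by blast
  qed
qed

lemma power_inj_not_root_of_unity:
  fixes q :: "'k::field"
  assumes q: "q \<noteq> 0" and nr: "not_root_of_unity q"
  shows "inj (\<lambda>n. q ^ n)"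
proof -
  have "q ^ a \<noteq> q ^ b" if "a < b" for a b
  proof
    assume "q ^ a = q ^ b"
    moreover have "q ^ b = q ^ a * q ^ (b - a)" using that by (simp add: power_add[symmetric])
    ultimately have "q ^ (b - a) = 1" using q by simp
    then show False using nr that unfolding not_root_of_unity_def by auto
  qed
  then show ?thesis by (metis injI linorder_neqE_nat)
qed

lemma shift_stable_subspace:
  fixes V :: "(nat \<Rightarrow> 'k::field) set" and \<theta> :: "nat \<Rightarrow> 'k"
  assumes add: "\<And>u v. u \<in> V \<Longrightarrow> v \<in> V \<Longrightarrow> (\<lambda>x. u x + v x) \<in> V"
    and scale: "\<And>c v. v \<in> V \<Longrightarrow> (\<lambda>x. c * v x) \<in> V"
    and diag: "\<And>v. v \<in> V \<Longrightarrow> (\<lambda>x. \<theta> x * v x) \<in> V"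
    and shift: "\<And>v. v \<in> V \<Longrightarrow> (\<lambda>x. if 1 \<le> x then v (x - 1) else 0) \<in> V"
    and fin: "\<And>v. v \<in> V \<Longrightarrow> finite {x. v x \<noteq> 0}"
    and inj: "inj \<theta>"
    and nonzero: "v0 \<in> V" "v0 j0 \<noteq> 0"
  shows "\<exists>m. V = {v. finite {x. v x \<noteq> 0} \<and> (\<forall>j<m. v j = 0)}"
proof -
  define m where "m = (LEAST j. \<exists>v\<in>V. v j \<noteq> 0)"
  have "\<exists>v\<in>V. v m \<noteq> 0" unfolding m_def by (rule LeastI_ex) (use nonzero in blast)
  then obtain vm where vm: "vm \<in> V" "vm m \<noteq> 0" by blast
  have below_m: "v j = 0" if "v \<in> V" "j < m" for v j
    using that not_less_Least[of j "\<lambda>j. \<exists>v\<in>V. v j \<noteq> 0"] unfolding m_def by blast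
  have unit_m: "(\<lambda>x. if x = m then 1 else 0) \<in> V"
    by (rule eigen_isolate[where B = UNIV, OF add scale diag fin _ _ vm])
       (use inj in auto)
  have unit: "(\<lambda>x. if x = m + t then 1 else 0) \<in> V" for t
  proof (induction t)
    case 0
    then show ?case using unit_m by simp
  next
    case (Suc t)
    have "(\<lambda>x. if 1 \<le> x then (if x - 1 = m + t then 1 else 0) else 0) \<in> V"
      by (rule shift[OF Suc])
    moreover have "(\<lambda>x. if 1 \<le> x then (if x - 1 = m + t then 1 else 0) else 0)
                 = (\<lambda>x. if x = m + Suc t then 1 else (0::'k))"
      by (rule ext) auto
    ultimately show ?case by simp
  qed
  have zero: "(\<lambda>x. 0) \<in> V" using scale[OF vm(1), of 0] by simp
  have combination: "(\<lambda>x. \<Sum>j\<in>F. if x = j then c j else 0) \<in> V"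
    if "finite F" "F \<subseteq> {m..}" for F c
    using that
  proof (induction F rule: finite_induct)
    case empty
    then show ?case using zero by simp
  next
    case (insert a F)
    obtain t where t: "a = m + t" using insert.prems by (metis atLeast_iff insert_subset le_Suc_ex)
    have "(\<lambda>x. c a * (if x = a then 1 else 0)) \<in> V" using scale[OF unit[of t]] t by simp
    then have "(\<lambda>x. (\<lambda>x. c a * (if x = a then 1 else 0)) x
                  + (\<lambda>x. \<Sum>j\<in>F. if x = j then c j else 0) x) \<in> V"
      using add insert by blast
    moreover have "(\<lambda>x. (\<lambda>x. c a * (if x = a then 1 else 0)) x
                  + (\<lambda>x. \<Sum>j\<in>F. if x = j then c j else 0) x)
                 = (\<lambda>x. \<Sum>j\<in>insert a F. if x = j then c j else 0)"
      using insert.hyps by (auto intro!: ext)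
    ultimately show ?case by simp
  qed
  have "v \<in> V" if "finite {x. v x \<noteq> 0}" "\<forall>j<m. v j = 0" for v
  proof -
    have "{x. v x \<noteq> 0} \<subseteq> {m..}" using that(2) by (auto simp: not_less[symmetric])
    then have "(\<lambda>x. \<Sum>j\<in>{x. v x \<noteq> 0}. if x = j then v j else 0) \<in> V"
      by (intro combination that(1))
    moreover have "(\<lambda>x. \<Sum>j\<in>{x. v x \<noteq> 0}. if x = j then v j else 0) = v"
      using that(1) by (auto intro!: ext)
    ultimately show ?thesis by simp
  qed
  then have "V = {v. finite {x. v x \<noteq> 0} \<and> (\<forall>j<m. v j = 0)}"
    using fin below_m by blast
  then show ?thesis by blast
qed

section \<open>The left ideal \<open>J = A(ab - 1)\<close>\<close>

text \<open>Right multiplication by \<open>w = ab\<close> moves coefficients along the diagonals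
  \<open>(n, m) \<mapsto> (n + 1, m + 1)\<close>.  Every diagonal starts at a unique point of the
  boundary \<open>{(n, m). n = 0 \<or> m = 0}\<close> of the quadrant.\<close>

definition boundary :: "(nat \<times> nat) set" where
  "boundary = {e. fst e = 0 \<or> snd e = 0}"

text \<open>The weights \<open>\<gamma>\<close> compensating the twisting factors along a diagonal.\<close>

fun diag_weight :: "'k::field \<Rightarrow> nat \<times> nat \<Rightarrow> 'k" where
  "diag_weight q (Suc n, Suc m) = diag_weight q (n, m) * q ^ m"
| "diag_weight q (0, m) = 1"
| "diag_weight q (Suc n, 0) = 1"

lemma diag_weight_nonzero: "q \<noteq> 0 \<Longrightarrow> diag_weight q p \<noteq> 0"
  by (induction q p rule: diag_weight.induct) auto

lemma diag_weight_boundary: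
  assumes "p \<in> boundary"
  shows "diag_weight q p = 1"
proof -
  obtain n m where p: "p = (n, m)" by fastforce
  show ?thesis using assms unfolding p boundary_def by (cases n; cases m) auto
qed

text \<open>The functionals \<open>\<psi>\<^sub>e\<close>, \<open>e \<in> boundary\<close>, cut out \<open>J\<close> and form a
  basis of the dual of \<open>A/J\<close>.\<close>

definition diag_coef :: "'k::field \<Rightarrow> nat \<times> nat \<Rightarrow> nat \<times> nat \<Rightarrow> 'k" where
  "diag_coef q e p = (if fst p + snd e = snd p + fst e then diag_weight q p else 0)"

definition psi :: "'k::field \<Rightarrow> nat \<times> nat \<Rightarrow> (nat \<times> nat \<Rightarrow> 'k) \<Rightarrow> 'k" where
  "psi q e f = pairing (diag_coef q e) f"

lemma psi_mon: "psi q e (qp_mon i j) = diag_coef q e (i, j)"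
  by (simp add: psi_def pairing_mon)

lemma psi_vanishes_on_J:
  assumes q: "q \<noteq> 0" and y: "y \<in> qp_carrier"
  shows "psi q e (qp_mult q y (qp_w q - qp_one)) = 0"
  unfolding psi_def w_eq_mon
  by (rule pairing_vanishes_on_principal[OF _ y]) (use q in \<open>auto simp: diag_coef_def power_inverse\<close>)

lemma psi_boundary_point: "psi q (a, b) f = psi q (a - min a b, b - min a b) f"
  unfolding psi_def diag_coef_def by (rule pairing_cong) auto

text \<open>The weighted partial sums of \<open>f\<close> along the diagonal through \<open>(n, m)\<close>, up to
  that point; they drive the division by \<open>w - 1\<close>.\<close>

definition diag_partial :: "'k::field \<Rightarrow> (nat \<times> nat \<Rightarrow> 'k) \<Rightarrow> nat \<times> nat \<Rightarrow> 'k" where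
  "diag_partial q f = (\<lambda>(n, m). pairing
     (\<lambda>p. if fst p + m = snd p + n \<and> fst p \<le> n then diag_weight q p else 0) f)"

lemma diag_partial_boundary:
  assumes f: "f \<in> qp_carrier" and nm: "(n, m) \<in> boundary"
  shows "diag_partial q f (n, m) = f (n, m) * diag_weight q (n, m)"
proof -
  have "(\<lambda>p. if fst p + m = snd p + n \<and> fst p \<le> n then diag_weight q p else 0)
      = (\<lambda>p. if p = (n, m) then 1 else 0)"
    using nm by (auto intro!: ext simp: diag_weight_boundary boundary_def)
  then show ?thesis by (simp add: diag_partial_def pairing_coef_single f diag_weight_boundary[OF nm])
qed

lemma diag_partial_step:
  assumes f: "f \<in> qp_carrier"
  shows "diag_partial q f (n + 1, m + 1)
       = diag_partial q f (n, m) + f (n + 1, m + 1) * diag_weight q (n + 1, m + 1)"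
proof -
  have "(\<lambda>p. if fst p + Suc m = snd p + Suc n \<and> fst p \<le> Suc n then diag_weight q p else 0)
      = (\<lambda>p. (if fst p + m = snd p + n \<and> fst p \<le> n then diag_weight q p else 0)
           + (if p = (Suc n, Suc m) then diag_weight q (Suc n, Suc m) else 0))"
    by (rule ext) auto
  then show ?thesis by (simp add: diag_partial_def pairing_coef_add pairing_coef_single f)
qed

lemma diag_partial_far:
  assumes N: "\<forall>n m. f (n, m) \<noteq> 0 \<longrightarrow> n \<le> N \<and> m \<le> N" and far: "\<not> (n \<le> N \<and> m \<le> N)"
  shows "diag_partial q f (n, m) = psi q (n, m) f"
  unfolding diag_partial_def psi_def diag_coef_def prod.case fst_conv snd_conv
proof (rule pairing_cong)
  fix p assume "f p \<noteq> 0"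
  then have "fst p \<le> N" "snd p \<le> N" using N by (cases p; auto)+
  then show "(if fst p + m = snd p + n \<and> fst p \<le> n then diag_weight q p else 0)
           = (if fst p + m = snd p + n then diag_weight q p else 0)"
    using far by auto
qed

text \<open>Conversely, \<open>f\<close> lies in \<open>J\<close> as soon as all \<open>\<psi>\<^sub>e f\<close>, \<open>e \<in> boundary\<close>, vanish:
  the partial diagonal sums of \<open>f\<close> then have finite support, and division by
  \<open>w - 1\<close> succeeds.\<close>

lemma psi_complete:
  assumes q: "q \<noteq> 0" and f: "f \<in> qp_carrier"
    and psi_zero: "\<And>e. e \<in> boundary \<Longrightarrow> psi q e f = 0"
  shows "f \<in> qp_lprincipal q (qp_w q - qp_one)"
proof -
  obtain N where N: "\<forall>n m. f (n, m) \<noteq> 0 \<longrightarrow> n \<le> N \<and> m \<le> N" using carrier_bound[OF f] by blast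
  have "diag_partial q f (n, m) = 0" if "\<not> (n \<le> N \<and> m \<le> N)" for n m
  proof -
    have "diag_partial q f (n, m) = psi q (n - min n m, m - min n m) f"
      by (simp only: diag_partial_far[OF N that] psi_boundary_point[of q n m f])
    also have "\<dots> = 0" by (rule psi_zero) (auto simp: boundary_def)
    finally show ?thesis .
  qed
  then have "{p. diag_partial q f p \<noteq> 0} \<subseteq> {..N} \<times> {..N}" by fastforce
  then have fin: "finite {p. diag_partial q f p \<noteq> 0}" by (rule finite_subset) simp
  show ?thesis unfolding w_eq_mon
  proof (rule mem_principal_by_division[OF q diag_weight_nonzero[OF q] _ _ diag_partial_step[OF f] fin])
    show "diag_weight q (n + 1, m + 1) = diag_weight q (n, m) * q ^ (m * 1)" for n m
      by simp
    show "diag_partial q f (n, m) = f (n, m) * diag_weight q (n, m)" if "\<not> (1 \<le> n \<and> 1 \<le> m)" for n m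
      using that by (intro diag_partial_boundary[OF f]) (auto simp: boundary_def)
  qed
qed

lemma mem_J_iff:
  assumes q: "q \<noteq> 0"
  shows "f \<in> qp_lprincipal q (qp_w q - qp_one)
     \<longleftrightarrow> f \<in> qp_carrier \<and> (\<forall>e\<in>boundary. psi q e f = 0)"
proof
  assume "f \<in> qp_lprincipal q (qp_w q - qp_one)"
  then obtain y where "y \<in> qp_carrier" "f = qp_mult q y (qp_w q - qp_one)"
    unfolding qp_lprincipal_def by blast
  then show "f \<in> qp_carrier \<and> (\<forall>e\<in>boundary. psi q e f = 0)"
    using psi_vanishes_on_J[OF q] by (simp add: mult_carrier diff_carrier mon_carrier w_eq_mon)
qed (use psi_complete[OF q] in blast)

definition theta :: "'k::field \<Rightarrow> nat \<times> nat \<Rightarrow> 'k" where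
  "theta q e = inverse q ^ fst e * q ^ snd e"

lemma psi_w:
  assumes q: "q \<noteq> 0" and g: "g \<in> qp_carrier" and e: "e \<in> boundary"
  shows "psi q e (qp_mult q (qp_w q) g) = theta q e * psi q e g"
proof -
  have "pairing (diag_coef q e) (qp_mult q (qp_mon 1 1) g)
      = pairing (\<lambda>p. theta q e * diag_coef q e p) g"
    unfolding pairing_mult_mon_left[OF g]
  proof (rule pairing_cong)
    fix p :: "nat \<times> nat"
    obtain n m where p: "p = (n, m)" by (cases p)
    have "q ^ m * inverse q ^ n = theta q e" if "n + snd e = m + fst e"
    proof (cases "fst e = 0")
      case True
      then have "m = n + snd e" using that by simp
      then show ?thesis using q True by (simp add: theta_def power_add power_inverse)
    next
      case False
      then have "snd e = 0" "n = m + fst e" using e that by (auto simp: boundary_def)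
      then show ?thesis using q by (simp add: theta_def power_add power_inverse field_simps)
    qed
    then show "(\<lambda>(n, m). diag_coef q e (n + 1, m + 1) * inverse q ^ (1 * n)) p
             = theta q e * diag_coef q e p"
      by (auto simp: p diag_coef_def mult_ac)
  qed
  then show ?thesis unfolding psi_def w_eq_mon by (simp add: pairing_coef_smul)
qed

lemma theta_inj:
  assumes q: "q \<noteq> 0" and nr: "not_root_of_unity q"
  shows "inj_on (theta q) boundary"
proof (rule inj_onI)
  fix e e' assume e: "e \<in> boundary" and e': "e' \<in> boundary" and eq: "theta q e = theta q e'"
  obtain a b a' b' where ab: "e = (a, b)" "e' = (a', b')" by (cases e; cases e')
  have "inverse q ^ a * q ^ b * (q ^ a * q ^ a') = inverse q ^ a' * q ^ b' * (q ^ a * q ^ a')"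
    using eq ab by (simp add: theta_def)
  then have "q ^ (b + a') = q ^ (b' + a)"
    using q by (simp add: power_add power_inverse field_simps)
  then have "b + a' = b' + a" using power_inj_not_root_of_unity[OF q nr] by (auto dest: injD)
  then show "e = e'" using e e' ab by (auto simp: boundary_def)
qed

text \<open>The coordinates of \<open>f + J\<close> in \<open>A/J\<close>.\<close>

definition psi_vector :: "'k::field \<Rightarrow> (nat \<times> nat \<Rightarrow> 'k) \<Rightarrow> nat \<times> nat \<Rightarrow> 'k" where
  "psi_vector q f = (\<lambda>e. if e \<in> boundary then psi q e f else 0)"

lemma psi_vector_finite:
  assumes g: "g \<in> qp_carrier"
  shows "finite {e. psi_vector q g e \<noteq> 0}"
proof -
  obtain N where N: "\<forall>n m. g (n, m) \<noteq> 0 \<longrightarrow> n \<le> N \<and> m \<le> N" using carrier_bound[OF g] by blast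
  have "e \<in> {..N} \<times> {..N}" if "psi_vector q g e \<noteq> 0" for e
  proof -
    obtain a b where e: "e = (a, b)" by fastforce
    have "e \<in> boundary" and nz: "psi q e g \<noteq> 0"
      using that unfolding psi_vector_def by (auto split: if_splits)
    then have eb: "a = 0 \<or> b = 0" by (simp add: boundary_def e)
    have "\<exists>p. g p \<noteq> 0 \<and> diag_coef q e p \<noteq> 0"
    proof (rule ccontr)
      assume "\<not> ?thesis"
      then have "psi q e g = 0" unfolding psi_def by (intro pairing_vanish) blast
      with nz show False by simp
    qed
    then obtain n m where nm: "g (n, m) \<noteq> 0" "diag_coef q e (n, m) \<noteq> 0" by auto
    have "n \<le> N" "m \<le> N" using N nm(1) by blast+
    moreover have "n + b = m + a" using nm(2) by (simp add: diag_coef_def e split: if_splits)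
    ultimately show ?thesis using eb e by auto
  qed
  then have "{e. psi_vector q g e \<noteq> 0} \<subseteq> {..N} \<times> {..N}" by blast
  then show ?thesis by (rule finite_subset) simp
qed

lemma psi_vector_add:
  "g \<in> qp_carrier \<Longrightarrow> h \<in> qp_carrier
     \<Longrightarrow> psi_vector q (g + h) = (\<lambda>e. psi_vector q g e + psi_vector q h e)"
  by (rule ext) (simp add: psi_vector_def psi_def pairing_add)

lemma psi_vector_smul:
  "g \<in> qp_carrier \<Longrightarrow> psi_vector q (\<lambda>p. c * g p) = (\<lambda>e. c * psi_vector q g e)"
  by (rule ext) (simp add: psi_vector_def psi_def pairing_smul)

lemma psi_vector_w:
  "q \<noteq> 0 \<Longrightarrow> g \<in> qp_carrier
     \<Longrightarrow> psi_vector q (qp_mult q (qp_w q) g) = (\<lambda>e. theta q e * psi_vector q g e)"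
  by (rule ext) (simp add: psi_vector_def psi_w)

section \<open>Maximality of \<open>J\<close>\<close>

lemma ideal_above_J_transfer:
  assumes q: "q \<noteq> 0" and L: "qp_left_ideal q L" and JL: "qp_lprincipal q (qp_w q - qp_one) \<subseteq> L"
    and g: "g \<in> L" and u: "u \<in> qp_carrier"
    and same: "\<And>e. e \<in> boundary \<Longrightarrow> psi q e u = psi q e g"
  shows "u \<in> L"
proof -
  have gc: "g \<in> qp_carrier" using g L unfolding qp_left_ideal_def by blast
  have "u - g \<in> qp_lprincipal q (qp_w q - qp_one)"
    using same unfolding mem_J_iff[OF q] psi_def
    by (simp add: diff_carrier[OF u gc] pairing_diff[OF u gc])
  then have "(u - g) + g \<in> L" using JL g L unfolding qp_left_ideal_def by blast
  then show ?thesis by simp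
qed

lemma psi_vectors_of_ideal:
  assumes q: "q \<noteq> 0" and L: "qp_left_ideal q L"
  shows "\<And>u v. u \<in> psi_vector q ` L \<Longrightarrow> v \<in> psi_vector q ` L
            \<Longrightarrow> (\<lambda>x. u x + v x) \<in> psi_vector q ` L"
    and "\<And>c v. v \<in> psi_vector q ` L \<Longrightarrow> (\<lambda>x. c * v x) \<in> psi_vector q ` L"
    and "\<And>v. v \<in> psi_vector q ` L \<Longrightarrow> (\<lambda>x. theta q x * v x) \<in> psi_vector q ` L"
    and "\<And>v. v \<in> psi_vector q ` L \<Longrightarrow> finite {x. v x \<noteq> 0}"
    and "\<And>v. v \<in> psi_vector q ` L \<Longrightarrow> {x. v x \<noteq> 0} \<subseteq> boundary"
proof -
  have Lc: "L \<subseteq> qp_carrier" and Ladd: "\<And>u v. u \<in> L \<Longrightarrow> v \<in> L \<Longrightarrow> u + v \<in> L"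
    and Lmul: "\<And>r u. r \<in> qp_carrier \<Longrightarrow> u \<in> L \<Longrightarrow> qp_mult q r u \<in> L"
    using L unfolding qp_left_ideal_def by blast+
  show "(\<lambda>x. u x + v x) \<in> psi_vector q ` L"
    if u: "u \<in> psi_vector q ` L" and v: "v \<in> psi_vector q ` L" for u v
  proof -
    obtain g where g: "u = psi_vector q g" "g \<in> L" using u by blast
    obtain h where h: "v = psi_vector q h" "h \<in> L" using v by blast
    have "psi_vector q (g + h) = (\<lambda>x. u x + v x)"
      using g h Lc by (simp add: psi_vector_add subset_iff)
    then show ?thesis using Ladd[OF g(2) h(2)] by (metis image_eqI)
  qed
  show "(\<lambda>x. c * v x) \<in> psi_vector q ` L" if v: "v \<in> psi_vector q ` L" for c v
  proof -
    obtain g where g: "v = psi_vector q g" "g \<in> L" using v by blast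
    have "psi_vector q (\<lambda>p. c * g p) = (\<lambda>x. c * v x)"
      using g Lc by (simp add: psi_vector_smul subset_iff)
    then show ?thesis using left_ideal_smul[OF L g(2), of c] by (metis image_eqI)
  qed
  show "(\<lambda>x. theta q x * v x) \<in> psi_vector q ` L" if v: "v \<in> psi_vector q ` L" for v
  proof -
    obtain g where g: "v = psi_vector q g" "g \<in> L" using v by blast
    have "psi_vector q (qp_mult q (qp_w q) g) = (\<lambda>x. theta q x * v x)"
      using g Lc by (simp add: psi_vector_w[OF q] subset_iff)
    moreover have "qp_mult q (qp_w q) g \<in> L"
      using Lmul[OF _ g(2)] by (simp add: w_eq_mon mon_carrier)
    ultimately show ?thesis by (metis image_eqI)
  qed
  show "finite {x. v x \<noteq> 0}" if v: "v \<in> psi_vector q ` L" for v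
  proof -
    obtain g where "v = psi_vector q g" "g \<in> L" using v by blast
    then show ?thesis using Lc psi_vector_finite by blast
  qed
  show "{x. v x \<noteq> 0} \<subseteq> boundary" if v: "v \<in> psi_vector q ` L" for v
    using v by (auto simp: psi_vector_def split: if_splits)
qed

text \<open>A left ideal strictly above \<open>J\<close> contains a monomial \<open>a\<^sup>i b\<^sup>j\<close> with \<open>(i, j)\<close> on
  the boundary: separating the eigenvectors of \<open>w\<close> in its space of \<open>\<psi>\<close>-vectors
  yields an element with the same \<open>\<psi>\<close>-coordinates as that monomial.\<close>

lemma ideal_above_J_contains_boundary_monomial:
  assumes q: "q \<noteq> 0" and nr: "not_root_of_unity q"
    and L: "qp_left_ideal q L" and JL: "qp_lprincipal q (qp_w q - qp_one) \<subseteq> L"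
    and f: "f \<in> L" "f \<notin> qp_lprincipal q (qp_w q - qp_one)"
  shows "\<exists>e\<in>boundary. qp_mon (fst e) (snd e) \<in> L"
proof -
  have "f \<in> qp_carrier" using f(1) L unfolding qp_left_ideal_def by blast
  then obtain e0 where e0: "e0 \<in> boundary" "psi q e0 f \<noteq> 0"
    using f(2) mem_J_iff[OF q] by blast
  let ?\<delta> = "\<lambda>e. if e = e0 then 1 else 0"
  have "psi_vector q f e0 \<noteq> 0" using e0 by (simp add: psi_vector_def)
  then have "?\<delta> \<in> psi_vector q ` L"
    using eigen_isolate[of "psi_vector q ` L" "theta q" boundary, OF psi_vectors_of_ideal(1-4)[OF q L]
          theta_inj[OF q nr] psi_vectors_of_ideal(5)[OF q L] imageI[OF f(1)]]
    by blast
  then obtain g where g: "?\<delta> = psi_vector q g" "g \<in> L" by (rule imageE)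
  have "qp_mon (fst e0) (snd e0) \<in> L"
  proof (rule ideal_above_J_transfer[OF q L JL g(2) mon_carrier])
    fix e assume e: "e \<in> boundary"
    have "psi q e g = ?\<delta> e"
      using fun_cong[OF g(1), of e] e by (simp add: psi_vector_def)
    moreover have "fst e0 + snd e = snd e0 + fst e \<longleftrightarrow> e = e0"
      using e e0(1) unfolding boundary_def by (cases e, cases e0) auto
    then have "diag_coef q e (fst e0, snd e0) = ?\<delta> e"
      by (simp add: diag_coef_def diag_weight_boundary[OF e0(1)])
    ultimately show "psi q e (qp_mon (fst e0) (snd e0)) = psi q e g" by (simp add: psi_mon)
  qed
  then show ?thesis using e0(1) by blast
qed

text \<open>A boundary monomial \<open>a\<^sup>i b\<^sup>j\<close> is a unit modulo \<open>J\<close>: \<open>b\<^sup>j a\<^sup>i\<close> times it is a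
  nonzero multiple of \<open>a\<^sup>i\<^sup>+\<^sup>j b\<^sup>i\<^sup>+\<^sup>j\<close>, which is congruent to a nonzero scalar.\<close>

lemma ideal_above_J_with_boundary_monomial:
  assumes q: "q \<noteq> 0" and L: "qp_left_ideal q L" and JL: "qp_lprincipal q (qp_w q - qp_one) \<subseteq> L"
    and e: "(a, b) \<in> boundary" and mon: "qp_mon a b \<in> L"
  shows "qp_one \<in> L"
proof -
  let ?k = "a + b"
  define s where "s = inverse q ^ (a * a) * diag_weight q (?k, ?k)"
  have s: "s \<noteq> 0" unfolding s_def using q diag_weight_nonzero[OF q] by simp
  have "qp_mult q (qp_mon b a) (qp_mon a b) \<in> L"
    using L mon mon_carrier unfolding qp_left_ideal_def by blast
  then have "(\<lambda>p. inverse s * (inverse q ^ (a * a) * qp_mon ?k ?k p)) \<in> L"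
    using left_ideal_smul[OF L] by (simp add: mon_mult_mon add.commute)
  then show ?thesis
  proof (rule ideal_above_J_transfer[OF q L JL _ mon_carrier])
    fix e :: "nat \<times> nat" assume e: "e \<in> boundary"
    have "psi q e (\<lambda>p. inverse s * (inverse q ^ (a * a) * qp_mon ?k ?k p))
        = inverse s * (inverse q ^ (a * a) * diag_coef q e (?k, ?k))"
      unfolding psi_def by (simp add: pairing_smul smul_carrier mon_carrier pairing_mon)
    also have "\<dots> = (if e = (0, 0) then inverse s * s else 0)"
      using e by (cases e) (auto simp: diag_coef_def s_def boundary_def)
    also have "\<dots> = (if e = (0, 0) then 1 else 0)"
      using s by simp
    also have "\<dots> = psi q e qp_one"
      using e by (cases e) (auto simp: psi_mon diag_coef_def boundary_def)
    finally show "psi q e qp_one = psi q e (\<lambda>p. inverse s * (inverse q ^ (a * a) * qp_mon ?k ?k p))"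
      by simp
  qed
qed

theorem J_maximal:
  fixes q :: "'k::field"
  assumes q: "q \<noteq> 0" and nr: "not_root_of_unity q"
  shows "qp_maximal_left_ideal q (qp_lprincipal q (qp_w q - qp_one))"
proof -
  let ?J = "qp_lprincipal q (qp_w q - qp_one)"
  have "qp_left_ideal q ?J" unfolding w_eq_mon by (rule principal_left_ideal)
  moreover have "qp_one \<notin> ?J"
    using mem_J_iff[OF q, of qp_one] by (auto simp: psi_mon diag_coef_def boundary_def)
  then have "?J \<noteq> qp_carrier" using mon_carrier by blast
  moreover have "L = ?J \<or> L = qp_carrier" if L: "qp_left_ideal q L" and JL: "?J \<subseteq> L" for L
  proof (cases "L = ?J")
    case False
    then obtain f where "f \<in> L" "f \<notin> ?J" using JL by blast
    then obtain e where "e \<in> boundary" "qp_mon (fst e) (snd e) \<in> L"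
      using ideal_above_J_contains_boundary_monomial[OF q nr L JL] by blast
    then have "qp_one \<in> L"
      using ideal_above_J_with_boundary_monomial[OF q L JL, of "fst e" "snd e"] by simp
    then show ?thesis using left_ideal_one[OF L] by blast
  qed simp
  ultimately show ?thesis unfolding qp_maximal_left_ideal_def by blast
qed

section \<open>The elements \<open>\<sigma>\<^sup>m(x)\<close> are not left invertible modulo \<open>J\<close>\<close>

text \<open>For \<open>\<lambda> \<noteq> 0\<close> the functional \<open>\<alpha>\<^sub>\<lambda>(a\<^sup>i b\<^sup>j) = \<lambda>\<^sup>-\<^sup>i \<beta>\<^sub>\<lambda>(j)\<close> vanishes on \<open>J\<close> and
  satisfies \<open>\<alpha>\<^sub>\<lambda>(a y) = \<lambda>\<^sup>-\<^sup>1 \<alpha>\<^sub>\<lambda>(y)\<close>; so it kills every \<open>(\<lambda> a - 1) c\<close>, while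
  \<open>\<alpha>\<^sub>\<lambda>(1) = 1\<close>.  With \<open>\<lambda> = q\<^sup>-\<^sup>m\<close> this applies to \<open>\<sigma>\<^sup>m(x) = q\<^sup>-\<^sup>m a - 1\<close>.\<close>

primrec alpha_b :: "'k::field \<Rightarrow> 'k \<Rightarrow> nat \<Rightarrow> 'k" where
  "alpha_b q l 0 = 1"
| "alpha_b q l (Suc j) = l * q ^ j * alpha_b q l j"

definition alpha :: "'k::field \<Rightarrow> 'k \<Rightarrow> nat \<times> nat \<Rightarrow> 'k" where
  "alpha q l p = inverse l ^ fst p * alpha_b q l (snd p)"

lemma alpha_vanishes_on_J:
  assumes q: "q \<noteq> 0" and l: "l \<noteq> 0" and y: "y \<in> qp_carrier"
  shows "pairing (alpha q l) (qp_mult q y (qp_w q - qp_one)) = 0"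
  unfolding w_eq_mon
  by (rule pairing_vanishes_on_principal[OF _ y])
     (use q l in \<open>simp add: alpha_def field_simps power_inverse\<close>)

lemma alpha_mult_a:
  assumes l: "l \<noteq> 0" and y: "y \<in> qp_carrier"
  shows "pairing (alpha q l) (qp_mult q qp_a y) = inverse l * pairing (alpha q l) y"
proof -
  have "pairing (alpha q l) (qp_mult q qp_a y) = pairing (\<lambda>p. inverse l * alpha q l p) y"
    unfolding pairing_mult_mon_left[OF y] by (rule pairing_cong) (auto simp: alpha_def)
  then show ?thesis by (simp add: pairing_coef_smul)
qed

theorem sigma_pow_not_left_invertible_mod_J:
  assumes q: "q \<noteq> 0" and c: "c \<in> qp_carrier"
  shows "qp_mult q ((qp_sigma q ^^ m) (qp_a - qp_one)) c - qp_one \<notin> qp_lprincipal q (qp_w q - qp_one)"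
proof
  let ?l = "inverse q ^ m"
  let ?u = "qp_mult q ((qp_sigma q ^^ m) (qp_a - qp_one)) c"
  have l: "?l \<noteq> 0" using q by simp
  have ac: "qp_mult q qp_a c \<in> qp_carrier" by (intro mult_carrier mon_carrier c)
  have u: "?u = (\<lambda>p. ?l * qp_mult q qp_a c p) - c"
    unfolding sigma_pow_a_minus_one by (simp add: mult_diff_left mult_smul_left mult_one_left)
  have "pairing (alpha q ?l) (?u - qp_one) = ?l * pairing (alpha q ?l) (qp_mult q qp_a c)
      - pairing (alpha q ?l) c - alpha q ?l (0, 0)"
    unfolding u
    by (simp only: pairing_diff[OF diff_carrier[OF smul_carrier[OF ac] c] mon_carrier]
          pairing_diff[OF smul_carrier[OF ac] c] pairing_smul[OF ac] pairing_mon)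
  also have "\<dots> = -1" unfolding alpha_mult_a[OF l c] using l by (simp add: alpha_def)
  finally have "pairing (alpha q ?l) (?u - qp_one) = -1" .
  moreover assume "?u - qp_one \<in> qp_lprincipal q (qp_w q - qp_one)"
  then obtain y where "y \<in> qp_carrier" "?u - qp_one = qp_mult q y (qp_w q - qp_one)"
    unfolding qp_lprincipal_def by blast
  then have "pairing (alpha q ?l) (?u - qp_one) = 0" using alpha_vanishes_on_J[OF q l] by simp
  ultimately show False by simp
qed

section \<open>The module \<open>N = A/Ax\<close>, \<open>x = a - 1\<close>\<close>

abbreviation ideal_Ax :: "'k::field \<Rightarrow> (nat \<times> nat \<Rightarrow> 'k) set" where
  "ideal_Ax q \<equiv> qp_lprincipal q (qp_a - qp_one)"

text \<open>Modulo \<open>Ax\<close> we have \<open>a\<^sup>i b\<^sup>j \<equiv> q\<^sup>i\<^sup>j b\<^sup>j\<close>, so \<open>N\<close> has the basis \<open>b\<^sup>j + Ax\<close>; the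
  functional \<open>\<chi>\<^sub>j\<close> reads off the coordinate of \<open>f + Ax\<close> at \<open>b\<^sup>j\<close>.\<close>

definition chi :: "'k::field \<Rightarrow> nat \<Rightarrow> (nat \<times> nat \<Rightarrow> 'k) \<Rightarrow> 'k" where
  "chi q j f = pairing (\<lambda>p. if snd p = j then q ^ (fst p * j) else 0) f"

lemma chi_zero: "chi q j 0 = 0"
  by (simp add: chi_def pairing_zero)

lemma chi_add: "f \<in> qp_carrier \<Longrightarrow> g \<in> qp_carrier \<Longrightarrow> chi q j (f + g) = chi q j f + chi q j g"
  by (simp add: chi_def pairing_add)

lemma chi_diff: "f \<in> qp_carrier \<Longrightarrow> g \<in> qp_carrier \<Longrightarrow> chi q j (f - g) = chi q j f - chi q j g"
  by (simp add: chi_def pairing_diff)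

lemma chi_smul: "f \<in> qp_carrier \<Longrightarrow> chi q j (\<lambda>p. c * f p) = c * chi q j f"
  by (simp add: chi_def pairing_smul)

lemma chi_vanishes_on_Ax:
  assumes q: "q \<noteq> 0" and y: "y \<in> qp_carrier"
  shows "chi q j (qp_mult q y (qp_a - qp_one)) = 0"
  unfolding chi_def
  by (rule pairing_vanishes_on_principal[OF _ y])
     (use q in \<open>auto simp: power_add power_inverse\<close>)

text \<open>The weighted partial sums of \<open>f\<close> along row \<open>m\<close> up to column \<open>n\<close>; they drive
  the division by \<open>a - 1\<close>.\<close>

definition row_partial :: "'k::field \<Rightarrow> (nat \<times> nat \<Rightarrow> 'k) \<Rightarrow> nat \<times> nat \<Rightarrow> 'k" where
  "row_partial q f = (\<lambda>(n, m). pairing (\<lambda>p. if snd p = m \<and> fst p \<le> n then q ^ (fst p * m) else 0) f)"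

lemma row_partial_first:
  assumes f: "f \<in> qp_carrier"
  shows "row_partial q f (0, m) = f (0, m)"
proof -
  have "(\<lambda>p. if snd p = m \<and> fst p \<le> 0 then q ^ (fst p * m) else 0) = (\<lambda>p. if p = (0, m) then 1 else 0)"
    by (auto intro!: ext)
  then show ?thesis by (simp add: row_partial_def pairing_coef_single f)
qed

lemma row_partial_step:
  assumes f: "f \<in> qp_carrier"
  shows "row_partial q f (n + 1, m) = row_partial q f (n, m) + f (n + 1, m) * q ^ ((n + 1) * m)"
proof -
  have "(\<lambda>p. if snd p = m \<and> fst p \<le> Suc n then q ^ (fst p * m) else 0)
      = (\<lambda>p. (if snd p = m \<and> fst p \<le> n then q ^ (fst p * m) else 0)
           + (if p = (Suc n, m) then q ^ (Suc n * m) else 0))"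
    by (rule ext) auto
  then show ?thesis by (simp add: row_partial_def pairing_coef_add pairing_coef_single f)
qed

lemma row_partial_far:
  assumes N: "\<forall>n m. f (n, m) \<noteq> 0 \<longrightarrow> n \<le> N \<and> m \<le> N" and far: "\<not> (n \<le> N \<and> m \<le> N)"
  shows "row_partial q f (n, m) = (if n \<le> N then 0 else chi q m f)"
proof (cases "n \<le> N")
  case True
  then have "m > N" using far by simp
  show ?thesis unfolding row_partial_def prod.case
  proof (simp only: True if_True, rule pairing_vanish)
    fix p assume "f p \<noteq> 0"
    then have "snd p \<le> N" using N by (cases p) auto
    then show "(if snd p = m \<and> fst p \<le> n then q ^ (fst p * m) else 0) = 0" using \<open>m > N\<close> by auto
  qed
next
  case False
  show ?thesis unfolding row_partial_def chi_def prod.case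
  proof (simp only: False if_False, rule pairing_cong)
    fix p assume "f p \<noteq> 0"
    then have "fst p \<le> N" using N by (cases p) auto
    then show "(if snd p = m \<and> fst p \<le> n then q ^ (fst p * m) else 0)
             = (if snd p = m then q ^ (fst p * m) else 0)"
      using False by auto
  qed
qed

text \<open>Conversely \<open>f \<in> Ax\<close> once all \<open>\<chi>\<^sub>j f\<close> vanish: then the partial row sums have
  finite support and division by \<open>a - 1\<close> succeeds.\<close>

lemma chi_complete:
  assumes q: "q \<noteq> 0" and f: "f \<in> qp_carrier" and chi_zero: "\<And>j. chi q j f = 0"
  shows "f \<in> ideal_Ax q"
proof -
  obtain N where N: "\<forall>n m. f (n, m) \<noteq> 0 \<longrightarrow> n \<le> N \<and> m \<le> N" using carrier_bound[OF f] by blast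
  have "row_partial q f (n, m) = 0" if "\<not> (n \<le> N \<and> m \<le> N)" for n m
    using row_partial_far[OF N that] chi_zero by simp
  then have "{p. row_partial q f p \<noteq> 0} \<subseteq> {..N} \<times> {..N}" by fastforce
  then have fin: "finite {p. row_partial q f p \<noteq> 0}" by (rule finite_subset) simp
  show ?thesis
  proof (rule mem_principal_by_division[where \<gamma> = "\<lambda>(n, m). q ^ (n * m)", OF q _ _ _ _ fin])
    show "(\<lambda>(n, m). q ^ (n * m)) p \<noteq> 0" for p using q by (simp split: prod.split)
    show "(\<lambda>(n, m). q ^ (n * m)) (n + 1, m + 0) = (\<lambda>(n, m). q ^ (n * m)) (n, m) * q ^ (m * 1)" for n m
      by (simp add: power_add algebra_simps)
    show "row_partial q f (n, m) = f (n, m) * (\<lambda>(n, m). q ^ (n * m)) (n, m)" if "\<not> (1 \<le> n \<and> 0 \<le> m)" for n m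
    proof -
      have "n = 0" using that by simp
      then show ?thesis using row_partial_first[OF f] by simp
    qed
    show "row_partial q f (n + 1, m + 0)
        = row_partial q f (n, m) + f (n + 1, m + 0) * (\<lambda>(n, m). q ^ (n * m)) (n + 1, m + 0)" for n m
      using row_partial_step[OF f] by simp
  qed
qed

lemma mem_Ax_iff:
  assumes q: "q \<noteq> 0"
  shows "u \<in> ideal_Ax q \<longleftrightarrow> u \<in> qp_carrier \<and> (\<forall>j. chi q j u = 0)"
proof
  assume "u \<in> ideal_Ax q"
  then obtain c where "c \<in> qp_carrier" "u = qp_mult q c (qp_a - qp_one)"
    unfolding qp_lprincipal_def by blast
  then show "u \<in> qp_carrier \<and> (\<forall>j. chi q j u = 0)"
    using chi_vanishes_on_Ax[OF q] by (simp add: mult_carrier diff_carrier mon_carrier)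
qed (use chi_complete[OF q] in blast)

lemma cls_eq_iff:
  assumes q: "q \<noteq> 0" and y: "y \<in> qp_carrier" and z: "z \<in> qp_carrier"
  shows "qp_cls (ideal_Ax q) y = qp_cls (ideal_Ax q) z \<longleftrightarrow> (\<forall>j. chi q j y = chi q j z)"
proof
  assume eq: "qp_cls (ideal_Ax q) y = qp_cls (ideal_Ax q) z"
  have "0 \<in> ideal_Ax q" using mem_Ax_iff[OF q] zero_carrier chi_zero by blast
  then have "y \<in> qp_cls (ideal_Ax q) y" unfolding qp_cls_def by force
  then have "y \<in> qp_cls (ideal_Ax q) z" using eq by simp
  then obtain i where "i \<in> ideal_Ax q" "y = z + i" unfolding qp_cls_def by blast
  then have "\<forall>j. chi q j (y - z) = 0" using mem_Ax_iff[OF q] by simp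
  then show "\<forall>j. chi q j y = chi q j z" using chi_diff[OF y z] by simp
next
  have sub: "qp_cls (ideal_Ax q) y \<subseteq> qp_cls (ideal_Ax q) z"
    if y: "y \<in> qp_carrier" and z: "z \<in> qp_carrier" and same: "\<forall>j. chi q j y = chi q j z" for y z
  proof
    fix X assume "X \<in> qp_cls (ideal_Ax q) y"
    then obtain i where i: "i \<in> ideal_Ax q" "X = y + i" unfolding qp_cls_def by blast
    have ic: "i \<in> qp_carrier" and i0: "\<forall>j. chi q j i = 0" using i(1) mem_Ax_iff[OF q] by auto
    have "\<forall>j. chi q j (y - z + i) = 0"
      using same i0 by (simp add: chi_add[OF diff_carrier[OF y z] ic] chi_diff[OF y z])
    then have "y - z + i \<in> ideal_Ax q"
      using mem_Ax_iff[OF q] add_carrier[OF diff_carrier[OF y z] ic] by blast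
    moreover have "X = z + (y - z + i)" using i(2) by simp
    ultimately show "X \<in> qp_cls (ideal_Ax q) z" unfolding qp_cls_def by blast
  qed
  assume "\<forall>j. chi q j y = chi q j z"
  then show "qp_cls (ideal_Ax q) y = qp_cls (ideal_Ax q) z"
    using sub[OF y z] sub[OF z y] by auto
qed

lemma chi_mult_mon_left:
  assumes q: "q \<noteq> 0" and g: "g \<in> qp_carrier"
  shows "chi q j (qp_mult q (qp_mon i k) g) = (if k \<le> j then q ^ (i * j) * chi q (j - k) g else 0)"
proof (cases "k \<le> j")
  case True
  then obtain d where d: "j = k + d" by (metis le_add_diff_inverse)
  have "pairing (\<lambda>(n, m). (if snd (n + i, m + k) = j then q ^ (fst (n + i, m + k) * j) else 0)
                          * inverse q ^ (k * n)) g
      = pairing (\<lambda>p. q ^ (i * j) * (if snd p = j - k then q ^ (fst p * (j - k)) else 0)) g"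
  proof (rule pairing_cong)
    fix p :: "nat \<times> nat"
    obtain n m where p: "p = (n, m)" by (cases p)
    have "q ^ ((n + i) * (k + d)) = q ^ (i * (k + d)) * q ^ (n * d) * q ^ (k * n)"
      by (simp add: power_add[symmetric] algebra_simps)
    then have "q ^ ((n + i) * (k + d)) * inverse q ^ (k * n) = q ^ (i * (k + d)) * q ^ (n * d)"
      using q by (simp add: power_inverse)
    then show "(\<lambda>(n, m). (if snd (n + i, m + k) = j then q ^ (fst (n + i, m + k) * j) else 0)
                          * inverse q ^ (k * n)) p
             = q ^ (i * j) * (if snd p = j - k then q ^ (fst p * (j - k)) else 0)"
      by (auto simp: p d)
  qed
  then show ?thesis
    using True unfolding chi_def pairing_mult_mon_left[OF g] by (simp add: pairing_coef_smul)
next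
  case False
  then show ?thesis unfolding chi_def pairing_mult_mon_left[OF g] by (auto intro!: pairing_vanish)
qed

lemma chi_mult_vanish:
  assumes q: "q \<noteq> 0" and r: "r \<in> qp_carrier" and y: "y \<in> qp_carrier"
    and low: "\<And>l. l < m \<Longrightarrow> chi q l y = 0" and j: "j < m"
  shows "chi q j (qp_mult q r y) = 0"
proof -
  have fin: "finite {p. r p \<noteq> 0}" using r by (simp add: qp_carrier_def)
  have "chi q j (qp_mult q r y)
      = (\<Sum>p\<in>{p. r p \<noteq> 0}. r p * chi q j (qp_mult q (qp_mon (fst p) (snd p)) y))"
    unfolding chi_def by (rule pairing_mult_decompose[OF y fin]) simp
  also have "\<dots> = 0"
  proof (intro sum.neutral ballI)
    fix p :: "nat \<times> nat"
    show "r p * chi q j (qp_mult q (qp_mon (fst p) (snd p)) y) = 0"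
      using low[of "j - snd p"] j by (simp add: chi_mult_mon_left[OF q y])
  qed
  finally show ?thesis .
qed

lemma chi_finite:
  assumes g: "g \<in> qp_carrier"
  shows "finite {j. chi q j g \<noteq> 0}"
proof -
  obtain N where N: "\<forall>n m. g (n, m) \<noteq> 0 \<longrightarrow> n \<le> N \<and> m \<le> N" using carrier_bound[OF g] by blast
  have "j \<le> N" if "chi q j g \<noteq> 0" for j
  proof (rule ccontr)
    assume "\<not> j \<le> N"
    then have "chi q j g = 0" unfolding chi_def by (intro pairing_vanish) (use N in auto)
    with that show False by simp
  qed
  then have "{j. chi q j g \<noteq> 0} \<subseteq> {..N}" by blast
  then show ?thesis by (rule finite_subset) simp
qed

text \<open>Every finitely supported coordinate vector occurs, namely for
  \<open>\<Sum>\<^sub>j v\<^sub>j b\<^sup>j\<close>; thus \<open>\<chi>\<close> identifies \<open>N\<close> with \<open>K[b]\<close>.\<close>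

lemma chi_surjective:
  fixes q :: "'k::field" and v :: "nat \<Rightarrow> 'k"
  assumes v: "finite {j. v j \<noteq> 0}"
  shows "\<exists>y\<in>qp_carrier. \<forall>j. chi q j y = v j"
proof
  define y :: "nat \<times> nat \<Rightarrow> 'k" where "y = (\<lambda>(n, m). if n = 0 then v m else 0)"
  have "{p. y p \<noteq> 0} \<subseteq> {0} \<times> {j. v j \<noteq> 0}" by (auto simp: y_def split: if_splits)
  then show yc: "y \<in> qp_carrier" unfolding qp_carrier_def using v by (auto intro: finite_subset)
  show "\<forall>j. chi q j y = v j"
  proof
    fix j
    have "chi q j y = pairing (\<lambda>p. if p = (0, j) then 1 else 0) y"
      unfolding chi_def by (rule pairing_cong) (auto simp: y_def split: if_splits)
    also have "\<dots> = y (0, j) * 1" by (rule pairing_coef_single[OF yc])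
    finally show "chi q j y = v j" by (simp add: y_def)
  qed
qed

section \<open>The submodules \<open>w\<^sup>m N\<close>\<close>

abbreviation w_pow_N :: "'k::field \<Rightarrow> nat \<Rightarrow> (nat \<times> nat \<Rightarrow> 'k) set set" where
  "w_pow_N q m \<equiv> qp_quot_lmult q (ideal_Ax q) (qp_pow q (qp_w q) m)"

lemma w_pow_carrier: "qp_pow q (qp_w q) m \<in> qp_carrier"
  unfolding pow_w_eq by (intro smul_carrier mon_carrier)

lemma chi_w_pow:
  assumes q: "q \<noteq> 0" and y: "y \<in> qp_carrier"
  shows "chi q j (qp_mult q (qp_pow q (qp_w q) m) y)
       = (if m \<le> j then inverse q ^ (\<Sum>i<m. i) * q ^ (m * j) * chi q (j - m) y else 0)"
  unfolding pow_w_eq mult_smul_left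
  by (simp add: chi_smul mult_carrier mon_carrier y chi_mult_mon_left[OF q y])

lemma mem_w_pow_N:
  assumes q: "q \<noteq> 0" and g: "g \<in> qp_carrier"
  shows "qp_cls (ideal_Ax q) g \<in> w_pow_N q m \<longleftrightarrow> (\<forall>j<m. chi q j g = 0)"
proof
  assume "qp_cls (ideal_Ax q) g \<in> w_pow_N q m"
  then obtain y where y: "y \<in> qp_carrier"
    "qp_cls (ideal_Ax q) g = qp_cls (ideal_Ax q) (qp_mult q (qp_pow q (qp_w q) m) y)"
    unfolding qp_quot_lmult_def by blast
  then have "\<forall>j. chi q j g = chi q j (qp_mult q (qp_pow q (qp_w q) m) y)"
    using cls_eq_iff[OF q g mult_carrier[OF w_pow_carrier y(1)]] by blast
  then show "\<forall>j<m. chi q j g = 0" using chi_w_pow[OF q y(1)] by simp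
next
  assume low: "\<forall>j<m. chi q j g = 0"
  define s where "s = inverse q ^ (\<Sum>i<m. i)"
  have s: "s \<noteq> 0" using q by (simp add: s_def)
  let ?v = "\<lambda>l. chi q (l + m) g / (s * q ^ (m * (l + m)))"
  have "{l. ?v l \<noteq> 0} \<subseteq> (\<lambda>l. l + m) -` {j. chi q j g \<noteq> 0}" by auto
  moreover have "finite ((\<lambda>l. l + m) -` {j. chi q j g \<noteq> 0})"
    by (rule finite_vimageI[OF chi_finite[OF g]]) (simp add: inj_on_def)
  ultimately obtain y where y: "y \<in> qp_carrier" "\<forall>l. chi q l y = ?v l"
    using chi_surjective[of ?v q] finite_subset by blast
  have "chi q j g = chi q j (qp_mult q (qp_pow q (qp_w q) m) y)" for j
  proof (cases "m \<le> j")
    case True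
    then have "j - m + m = j" by simp
    then show ?thesis using s q by (simp add: chi_w_pow[OF q y(1)] y(2) True s_def[symmetric])
  qed (use low chi_w_pow[OF q y(1)] in simp)
  then have "qp_cls (ideal_Ax q) g = qp_cls (ideal_Ax q) (qp_mult q (qp_pow q (qp_w q) m) y)"
    using cls_eq_iff[OF q g mult_carrier[OF w_pow_carrier y(1)]] by blast
  then show "qp_cls (ideal_Ax q) g \<in> w_pow_N q m" unfolding qp_quot_lmult_def using y(1) by blast
qed

lemma w_pow_N_classes:
  assumes "X \<in> w_pow_N q m"
  shows "\<exists>g\<in>qp_carrier. X = qp_cls (ideal_Ax q) g"
  using assms mult_carrier[OF w_pow_carrier] unfolding qp_quot_lmult_def by blast

lemma w_pow_N_eqI:
  assumes q: "q \<noteq> 0" and S: "S \<subseteq> qp_quot (ideal_Ax q)"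
    and char: "\<And>g. g \<in> qp_carrier \<Longrightarrow> qp_cls (ideal_Ax q) g \<in> S \<longleftrightarrow> (\<forall>j<m. chi q j g = 0)"
  shows "S = w_pow_N q m"
proof (rule set_eqI)
  fix X
  have "X \<in> S \<longleftrightarrow> X \<in> w_pow_N q m" if "g \<in> qp_carrier" "X = qp_cls (ideal_Ax q) g" for g
    using that char mem_w_pow_N[OF q] by simp
  then show "X \<in> S \<longleftrightarrow> X \<in> w_pow_N q m"
    using S w_pow_N_classes unfolding qp_quot_def by blast
qed

lemma w_pow_N_submodule:
  fixes q :: "'k::field"
  assumes q: "q \<noteq> 0"
  shows "qp_quot_submodule q (ideal_Ax q) (w_pow_N q m)"
  unfolding qp_quot_submodule_def
proof (intro conjI ballI impI)
  show "w_pow_N q m \<subseteq> qp_quot (ideal_Ax q)"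
    using w_pow_N_classes unfolding qp_quot_def by blast
  show "qp_cls (ideal_Ax q) 0 \<in> w_pow_N q m"
    using mem_w_pow_N[OF q zero_carrier] by (simp add: chi_zero)
next
  fix y z :: "nat \<times> nat \<Rightarrow> 'k" assume y: "y \<in> qp_carrier" and z: "z \<in> qp_carrier"
    and "qp_cls (ideal_Ax q) y \<in> w_pow_N q m" "qp_cls (ideal_Ax q) z \<in> w_pow_N q m"
  then show "qp_cls (ideal_Ax q) (y + z) \<in> w_pow_N q m"
    using mem_w_pow_N[OF q] add_carrier[OF y z] by (simp add: chi_add[OF y z])
next
  fix r y :: "nat \<times> nat \<Rightarrow> 'k" assume r: "r \<in> qp_carrier" and y: "y \<in> qp_carrier"
    and "qp_cls (ideal_Ax q) y \<in> w_pow_N q m"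
  then have "\<forall>j<m. chi q j y = 0" using mem_w_pow_N[OF q y] by simp
  then have "\<forall>j<m. chi q j (qp_mult q r y) = 0" using chi_mult_vanish[OF q r y] by blast
  then show "qp_cls (ideal_Ax q) (qp_mult q r y) \<in> w_pow_N q m"
    using mem_w_pow_N[OF q mult_carrier[OF r y]] by simp
qed

lemma b_pow_class:
  fixes q :: "'k::field"
  assumes q: "q \<noteq> 0"
  obtains y where "y \<in> qp_carrier" "qp_cls (ideal_Ax q) y \<in> w_pow_N q m"
    "qp_cls (ideal_Ax q) y \<notin> w_pow_N q (Suc m)" "qp_cls (ideal_Ax q) y \<noteq> qp_cls (ideal_Ax q) 0"
proof -
  obtain y where y: "y \<in> qp_carrier" "\<forall>j. chi q j y = (if j = m then 1 else 0)"
  proof -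
    have "{j. (if j = m then 1 else 0 :: 'k) \<noteq> 0} = {m}" by auto
    then show ?thesis using chi_surjective[of "\<lambda>j. if j = m then 1 else 0" q] that by auto
  qed
  have "chi q m y \<noteq> chi q m 0" using y(2) by (simp add: chi_zero)
  then have "qp_cls (ideal_Ax q) y \<noteq> qp_cls (ideal_Ax q) 0"
    using cls_eq_iff[OF q y(1) zero_carrier] by blast
  moreover have "qp_cls (ideal_Ax q) y \<in> w_pow_N q m"
    using mem_w_pow_N[OF q y(1), of m] y(2) by simp
  moreover have "qp_cls (ideal_Ax q) y \<notin> w_pow_N q (Suc m)"
    unfolding mem_w_pow_N[OF q y(1), of "Suc m"] using y(2) by auto
  ultimately show ?thesis using that y(1) by blast
qed

lemma w_pow_N_strict:
  assumes q: "q \<noteq> 0"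
  shows "w_pow_N q (Suc m) \<subset> w_pow_N q m"
proof
  show "w_pow_N q (Suc m) \<subseteq> w_pow_N q m"
  proof
    fix X assume X: "X \<in> w_pow_N q (Suc m)"
    then obtain g where g: "g \<in> qp_carrier" "X = qp_cls (ideal_Ax q) g"
      using w_pow_N_classes by blast
    then have "\<forall>j<Suc m. chi q j g = 0" using X mem_w_pow_N[OF q g(1), of "Suc m"] by blast
    then show "X \<in> w_pow_N q m" using mem_w_pow_N[OF q g(1), of m] g(2) by simp
  qed
  obtain y where "qp_cls (ideal_Ax q) y \<in> w_pow_N q m" "qp_cls (ideal_Ax q) y \<notin> w_pow_N q (Suc m)"
    using b_pow_class[OF q] .
  then show "w_pow_N q (Suc m) \<noteq> w_pow_N q m" by blast
qed

lemma w_pow_N_nonzero: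
  assumes q: "q \<noteq> 0"
  shows "w_pow_N q m \<noteq> {qp_cls (ideal_Ax q) 0}"
proof
  assume eq: "w_pow_N q m = {qp_cls (ideal_Ax q) 0}"
  obtain y where "qp_cls (ideal_Ax q) y \<in> w_pow_N q m" "qp_cls (ideal_Ax q) y \<noteq> qp_cls (ideal_Ax q) 0"
    by (rule b_pow_class[OF q])
  then show False using eq by blast
qed

section \<open>Classification of the nonzero submodules of \<open>N\<close>\<close>

definition coords :: "'k::field \<Rightarrow> (nat \<times> nat \<Rightarrow> 'k) set set \<Rightarrow> (nat \<Rightarrow> 'k) set" where
  "coords q S = {(\<lambda>j. chi q j g) | g. g \<in> qp_carrier \<and> qp_cls (ideal_Ax q) g \<in> S}"

lemma coords_stable:
  assumes q: "q \<noteq> 0" and S: "qp_quot_submodule q (ideal_Ax q) S"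
  shows "\<And>u v. u \<in> coords q S \<Longrightarrow> v \<in> coords q S \<Longrightarrow> (\<lambda>x. u x + v x) \<in> coords q S"
    and "\<And>c v. v \<in> coords q S \<Longrightarrow> (\<lambda>x. c * v x) \<in> coords q S"
    and "\<And>v. v \<in> coords q S \<Longrightarrow> (\<lambda>x. q ^ x * v x) \<in> coords q S"
    and "\<And>v. v \<in> coords q S \<Longrightarrow> (\<lambda>x. if 1 \<le> x then v (x - 1) else 0) \<in> coords q S"
proof -
  have add: "\<And>y z. y \<in> qp_carrier \<Longrightarrow> z \<in> qp_carrier \<Longrightarrow> qp_cls (ideal_Ax q) y \<in> S
               \<Longrightarrow> qp_cls (ideal_Ax q) z \<in> S \<Longrightarrow> qp_cls (ideal_Ax q) (y + z) \<in> S"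
    and mult: "\<And>r y. r \<in> qp_carrier \<Longrightarrow> y \<in> qp_carrier \<Longrightarrow> qp_cls (ideal_Ax q) y \<in> S
               \<Longrightarrow> qp_cls (ideal_Ax q) (qp_mult q r y) \<in> S"
    using S unfolding qp_quot_submodule_def by blast+
  have act: "F v \<in> coords q S"
    if v: "v \<in> coords q S" and r: "r \<in> qp_carrier"
      and F: "\<And>g. g \<in> qp_carrier \<Longrightarrow> F (\<lambda>j. chi q j g) = (\<lambda>j. chi q j (qp_mult q r g))" for v r F
  proof -
    obtain g where g: "v = (\<lambda>j. chi q j g)" "g \<in> qp_carrier" "qp_cls (ideal_Ax q) g \<in> S"
      using v unfolding coords_def by blast
    then show ?thesis
      unfolding coords_def using F[OF g(2)] mult[OF r g(2,3)] mult_carrier[OF r g(2)] by auto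
  qed
  show "(\<lambda>x. u x + v x) \<in> coords q S" if u: "u \<in> coords q S" and v: "v \<in> coords q S" for u v
  proof -
    obtain g where g: "u = (\<lambda>j. chi q j g)" "g \<in> qp_carrier" "qp_cls (ideal_Ax q) g \<in> S"
      using u unfolding coords_def by blast
    obtain h where h: "v = (\<lambda>j. chi q j h)" "h \<in> qp_carrier" "qp_cls (ideal_Ax q) h \<in> S"
      using v unfolding coords_def by blast
    have "(\<lambda>x. u x + v x) = (\<lambda>j. chi q j (g + h))"
      by (simp add: g(1) h(1) chi_add[OF g(2) h(2)])
    then show ?thesis unfolding coords_def
      using add[OF g(2) h(2) g(3) h(3)] add_carrier[OF g(2) h(2)] by blast
  qed
  show "(\<lambda>x. c * v x) \<in> coords q S" if "v \<in> coords q S" for c v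
    by (rule act[OF that smul_carrier[OF mon_carrier, of c 0 0]])
       (simp add: mult_smul_left mult_one_left chi_smul)
  show "(\<lambda>x. q ^ x * v x) \<in> coords q S" if "v \<in> coords q S" for v
    by (rule act[OF that mon_carrier[of 1 0]]) (simp add: chi_mult_mon_left[OF q])
  show "(\<lambda>x. if 1 \<le> x then v (x - 1) else 0) \<in> coords q S" if "v \<in> coords q S" for v
    by (rule act[OF that mon_carrier[of 0 1]]) (auto simp: chi_mult_mon_left[OF q])
qed

theorem submodule_is_w_pow_N:
  fixes q :: "'k::field"
  assumes q: "q \<noteq> 0" and nr: "not_root_of_unity q"
    and S: "qp_quot_submodule q (ideal_Ax q) S" and S_nonzero: "S \<noteq> {qp_cls (ideal_Ax q) 0}"
  shows "\<exists>m. S = w_pow_N q m"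
proof -
  have S_sub: "S \<subseteq> qp_quot (ideal_Ax q)" and S0: "qp_cls (ideal_Ax q) 0 \<in> S"
    using S unfolding qp_quot_submodule_def by blast+
  obtain g0 where g0: "g0 \<in> qp_carrier" "qp_cls (ideal_Ax q) g0 \<in> S"
    "qp_cls (ideal_Ax q) g0 \<noteq> qp_cls (ideal_Ax q) 0"
    using S_nonzero S0 S_sub unfolding qp_quot_def by blast
  then obtain j0 where j0: "chi q j0 g0 \<noteq> 0"
    using cls_eq_iff[OF q g0(1) zero_carrier] by (auto simp: chi_zero)
  have fin: "finite {x. v x \<noteq> 0}" if "v \<in> coords q S" for v
    using that chi_finite unfolding coords_def by blast
  obtain m where m: "coords q S = {v. finite {x. v x \<noteq> 0} \<and> (\<forall>j<m. v j = 0)}"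
    using shift_stable_subspace[OF coords_stable[OF q S] fin
        power_inj_not_root_of_unity[OF q nr], of "\<lambda>j. chi q j g0" j0] g0 j0
    unfolding coords_def by blast
  have "qp_cls (ideal_Ax q) g \<in> S \<longleftrightarrow> (\<forall>j<m. chi q j g = 0)" if g: "g \<in> qp_carrier" for g
  proof -
    have "qp_cls (ideal_Ax q) g \<in> S \<longleftrightarrow> (\<lambda>j. chi q j g) \<in> coords q S"
    proof
      assume "(\<lambda>j. chi q j g) \<in> coords q S"
      then obtain g' where "(\<lambda>j. chi q j g) = (\<lambda>j. chi q j g')" "g' \<in> qp_carrier"
        "qp_cls (ideal_Ax q) g' \<in> S" unfolding coords_def by blast
      then show "qp_cls (ideal_Ax q) g \<in> S" using cls_eq_iff[OF q g] by metis
    qed (use g in \<open>auto simp: coords_def\<close>)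
    then show ?thesis using m chi_finite[OF g] by simp
  qed
  then show ?thesis using w_pow_N_eqI[OF q S_sub] by blast
qed

lemma not_artinian_by_chain:
  assumes "\<And>n. qp_quot_submodule q I (S n)" and "\<And>n. S (Suc n) \<subset> S n"
  shows "\<not> qp_quot_artinian q I"
proof
  assume "qp_quot_artinian q I"
  then have "(\<forall>n. qp_quot_submodule q I (S n)) \<and> (\<forall>n. S (Suc n) \<subseteq> S n)
               \<longrightarrow> (\<exists>n. \<forall>k\<ge>n. S k = S n)"
    unfolding qp_quot_artinian_def by (rule spec)
  moreover have "(\<forall>n. qp_quot_submodule q I (S n)) \<and> (\<forall>n. S (Suc n) \<subseteq> S n)"
    using assms by (simp add: psubset_imp_subset)
  ultimately obtain n where "\<forall>k\<ge>n. S k = S n" by blast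
  then have "Suc n \<ge> n \<longrightarrow> S (Suc n) = S n" by (rule spec)
  then have "S (Suc n) = S n" by simp
  then show False using assms(2)[of n] by simp
qed

theorem proposition3p2:
  fixes q :: "'k::field"
  assumes "q \<noteq> 0" and "not_root_of_unity q"
  defines "J \<equiv> qp_lprincipal q (qp_w q - qp_one)"
      and "x \<equiv> (qp_a - qp_one :: nat \<times> nat \<Rightarrow> 'k)"
  defines "I \<equiv> qp_lprincipal q x"
  shows "(qp_maximal_left_ideal q J
          \<and> (\<forall>m c. c \<in> qp_carrier \<longrightarrow> qp_mult q ((qp_sigma q ^^ m) x) c - qp_one \<notin> J))
       \<and> (\<not> qp_quot_artinian q I
          \<and> (\<forall>S. (qp_quot_submodule q I S \<and> S \<noteq> {qp_cls I 0})
                 \<longleftrightarrow> (\<exists>m. S = qp_quot_lmult q I (qp_pow q (qp_w q) m)))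
          \<and> (\<forall>m. qp_quot_lmult q I (qp_pow q (qp_w q) (Suc m))
                 \<subset> qp_quot_lmult q I (qp_pow q (qp_w q) m)))"
proof -
  note q = \<open>q \<noteq> 0\<close> and nr = \<open>not_root_of_unity q\<close>
  have I: "I = ideal_Ax q" unfolding I_def x_def ..
  have part_a: "qp_maximal_left_ideal q J
      \<and> (\<forall>m c. c \<in> qp_carrier \<longrightarrow> qp_mult q ((qp_sigma q ^^ m) x) c - qp_one \<notin> J)"
    unfolding J_def x_def using J_maximal[OF q nr] sigma_pow_not_left_invertible_mod_J[OF q] by blast
  have chain: "\<forall>m. w_pow_N q (Suc m) \<subset> w_pow_N q m" using w_pow_N_strict[OF q] by blast
  have not_artinian: "\<not> qp_quot_artinian q (ideal_Ax q)"
    by (rule not_artinian_by_chain[where S = "w_pow_N q", OF w_pow_N_submodule[OF q] w_pow_N_strict[OF q]])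
  have classification: "\<forall>S. (qp_quot_submodule q (ideal_Ax q) S \<and> S \<noteq> {qp_cls (ideal_Ax q) 0})
      \<longleftrightarrow> (\<exists>m. S = w_pow_N q m)"
  proof (intro allI iffI)
    fix S assume "qp_quot_submodule q (ideal_Ax q) S \<and> S \<noteq> {qp_cls (ideal_Ax q) 0}"
    then show "\<exists>m. S = w_pow_N q m" using submodule_is_w_pow_N[OF q nr] by blast
  next
    fix S assume "\<exists>m. S = w_pow_N q m"
    then obtain m where "S = w_pow_N q m" ..
    then show "qp_quot_submodule q (ideal_Ax q) S \<and> S \<noteq> {qp_cls (ideal_Ax q) 0}"
      using w_pow_N_submodule[OF q, of m] w_pow_N_nonzero[OF q, of m] by simp
  qed
  show ?thesis unfolding I using part_a not_artinian classification chain by blast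
qed

end
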